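(* Let $G$ be a t.d.l.c. group and $K$ a compact open subgroup of $G$. Then $$\mathrm{dH}^1(G,\mathbb{Q}[G/K])\cong \frac{\mathcal{A}Inv_K(G,\mathbb{Q})}{C(G/K)+\mathbb{Q}[G/K]^K}.$$
   Context: $\mathrm{dH}^k(G,-)$ is the $k$-th right derived functor of $\mathrm{Hom}_{\mathbb{Q}[G]}(\mathbb{Q},-)$ on the abelian category of discrete left $\mathbb{Q}[G]$-modules (modules whose point stabilizers are open). Functions $G/K\to\mathbb{Q}$ carry the $G$-action $(g\cdot\alpha)(x)=\alpha(g^{-1}x)$; $\alpha=_a\beta$ means they differ at only finitely many points; $\mathbb{Q}[G/K]$ is identified with the almost zero functions via $\sum q_x x\mapsto(x\mapsto q_x)$, and $\mathbb{Q}[G/K]^K$ denotes its $K$-fixed elements. $\mathcal{A}Inv_K(G,\mathbb{Q})$ is the space of functions $\alpha\colon G/K\to\mathbb{Q}$ with $g\cdot\alpha=_a\alpha$ for all $g\in G$ and $k\cdot\alpha=\alpha$ for all $k\in K$. $C(G/K)$ is the space of constant functions. *)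

theory Defs
  imports "HOL-Analysis.Analysis" "HOL-Algebra.Left_Coset"
begin

definition topological_group :: "('g, 'b) monoid_scheme \<Rightarrow> 'g topology \<Rightarrow> bool" where
  "topological_group G T \<longleftrightarrow> group G \<and> topspace T = carrier G \<and>
     continuous_map (prod_topology T T) T (\<lambda>(x, y). x \<otimes>\<^bsub>G\<^esub> y) \<and>
     continuous_map T T (\<lambda>x. inv\<^bsub>G\<^esub> x)"

definition totally_disconnected_space :: "'a topology \<Rightarrow> bool" where
  "totally_disconnected_space T \<longleftrightarrow>
     (\<forall>S. connectedin T S \<longrightarrow> (\<exists>x. S \<subseteq> {x}))"

definition tdlc_group :: "('g, 'b) monoid_scheme \<Rightarrow> 'g topology \<Rightarrow> bool" where
  "tdlc_group G T \<longleftrightarrow> topological_group G T \<and> Hausdorff_space T \<and>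
     locally_compact_space T \<and> totally_disconnected_space T"

record ('g, 'm) qg_module =
  mcar  :: "'m set"
  madd  :: "'m \<Rightarrow> 'm \<Rightarrow> 'm"
  mzero :: "'m"
  msmul :: "rat \<Rightarrow> 'm \<Rightarrow> 'm"
  mact  :: "'g \<Rightarrow> 'm \<Rightarrow> 'm"

definition rat_vector_space :: "('g, 'm) qg_module \<Rightarrow> bool" where
  "rat_vector_space M \<longleftrightarrow>
     mzero M \<in> mcar M \<and>
     (\<forall>x\<in>mcar M. \<forall>y\<in>mcar M. madd M x y \<in> mcar M) \<and>
     (\<forall>q. \<forall>x\<in>mcar M. msmul M q x \<in> mcar M) \<and>
     (\<forall>x\<in>mcar M. \<forall>y\<in>mcar M. \<forall>z\<in>mcar M. madd M (madd M x y) z = madd M x (madd M y z)) \<and>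
     (\<forall>x\<in>mcar M. \<forall>y\<in>mcar M. madd M x y = madd M y x) \<and>
     (\<forall>x\<in>mcar M. madd M (mzero M) x = x) \<and>
     (\<forall>x\<in>mcar M. \<exists>y\<in>mcar M. madd M x y = mzero M) \<and>
     (\<forall>q. \<forall>x\<in>mcar M. \<forall>y\<in>mcar M. msmul M q (madd M x y) = madd M (msmul M q x) (msmul M q y)) \<and>
     (\<forall>p q. \<forall>x\<in>mcar M. msmul M (p + q) x = madd M (msmul M p x) (msmul M q x)) \<and>
     (\<forall>p q. \<forall>x\<in>mcar M. msmul M (p * q) x = msmul M p (msmul M q x)) \<and>
     (\<forall>x\<in>mcar M. msmul M 1 x = x)"

definition qg_module :: "('g, 'b) monoid_scheme \<Rightarrow> ('g, 'm) qg_module \<Rightarrow> bool" where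
  "qg_module G M \<longleftrightarrow> rat_vector_space M \<and>
     (\<forall>g\<in>carrier G. \<forall>x\<in>mcar M. mact M g x \<in> mcar M) \<and>
     (\<forall>g\<in>carrier G. \<forall>x\<in>mcar M. \<forall>y\<in>mcar M. mact M g (madd M x y) = madd M (mact M g x) (mact M g y)) \<and>
     (\<forall>g\<in>carrier G. \<forall>q. \<forall>x\<in>mcar M. mact M g (msmul M q x) = msmul M q (mact M g x)) \<and>
     (\<forall>x\<in>mcar M. mact M \<one>\<^bsub>G\<^esub> x = x) \<and>
     (\<forall>g\<in>carrier G. \<forall>h\<in>carrier G. \<forall>x\<in>mcar M. mact M (g \<otimes>\<^bsub>G\<^esub> h) x = mact M g (mact M h x))"

definition discrete_module :: "('g, 'b) monoid_scheme \<Rightarrow> 'g topology \<Rightarrow> ('g, 'm) qg_module \<Rightarrow> bool" where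
  "discrete_module G T M \<longleftrightarrow> qg_module G M \<and>
     (\<forall>x\<in>mcar M. openin T {g \<in> carrier G. mact M g x = x})"

definition module_hom ::
  "('g, 'b) monoid_scheme \<Rightarrow> ('g, 'm) qg_module \<Rightarrow> ('g, 'n) qg_module \<Rightarrow> ('m \<Rightarrow> 'n) \<Rightarrow> bool" where
  "module_hom G M N f \<longleftrightarrow>
     (\<forall>x\<in>mcar M. f x \<in> mcar N) \<and>
     (\<forall>x\<in>mcar M. \<forall>y\<in>mcar M. f (madd M x y) = madd N (f x) (f y)) \<and>
     (\<forall>q. \<forall>x\<in>mcar M. f (msmul M q x) = msmul N q (f x)) \<and>
     (\<forall>g\<in>carrier G. \<forall>x\<in>mcar M. f (mact M g x) = mact N g (f x))"

text \<open>Since HOL cannot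
  quantify over types inside a definition, the test modules range over all discrete
  modules whose carrier lives in the same type as the module itself.\<close>

definition injective_discrete_module ::
  "('g, 'b) monoid_scheme \<Rightarrow> 'g topology \<Rightarrow> ('g, 'm) qg_module \<Rightarrow> bool" where
  "injective_discrete_module G T I \<longleftrightarrow> discrete_module G T I \<and>
     (\<forall>(A :: ('g, 'm) qg_module) (B :: ('g, 'm) qg_module) i f.
        discrete_module G T A \<and> discrete_module G T B \<and>
        module_hom G A B i \<and> inj_on i (mcar A) \<and> module_hom G A I f \<longrightarrow>
        (\<exists>h. module_hom G B I h \<and> (\<forall>a\<in>mcar A. h (i a) = f a)))"

text \<open>The beginning  0 \<rightarrow> M \<rightarrow> I0 \<rightarrow> I1 \<rightarrow> I2  of an injective resolution of M
  in the category of discrete Q[G]-modules (enough to compute the first derived functor).\<close>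

definition injective_resolution_1 ::
  "('g, 'b) monoid_scheme \<Rightarrow> 'g topology \<Rightarrow> ('g, 'n) qg_module \<Rightarrow>
   ('g, 'm) qg_module \<Rightarrow> ('g, 'm) qg_module \<Rightarrow> ('g, 'm) qg_module \<Rightarrow>
   ('n \<Rightarrow> 'm) \<Rightarrow> ('m \<Rightarrow> 'm) \<Rightarrow> ('m \<Rightarrow> 'm) \<Rightarrow> bool" where
  "injective_resolution_1 G T M I0 I1 I2 \<epsilon> d0 d1 \<longleftrightarrow>
     discrete_module G T M \<and>
     injective_discrete_module G T I0 \<and> injective_discrete_module G T I1 \<and>
     injective_discrete_module G T I2 \<and>
     module_hom G M I0 \<epsilon> \<and> module_hom G I0 I1 d0 \<and> module_hom G I1 I2 d1 \<and>
     inj_on \<epsilon> (mcar M) \<and>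
     \<epsilon> ` mcar M = {x \<in> mcar I0. d0 x = mzero I1} \<and>
     d0 ` mcar I0 = {x \<in> mcar I1. d1 x = mzero I2}"

text \<open>Hom_{Q[G]}(Q, M) = the G-fixed points.\<close>

definition fixed_points :: "('g, 'b) monoid_scheme \<Rightarrow> ('g, 'm) qg_module \<Rightarrow> 'm set" where
  "fixed_points G M = {x \<in> mcar M. \<forall>g\<in>carrier G. mact M g x = x}"

text \<open>dH^1 computed from the resolution: cocycles modulo coboundaries of the complex
  of G-fixed points  I0^G \<rightarrow> I1^G \<rightarrow> I2^G.\<close>

definition dH1_cocycles :: "('g, 'b) monoid_scheme \<Rightarrow> ('g, 'm) qg_module \<Rightarrow> ('g, 'm) qg_module \<Rightarrow> ('m \<Rightarrow> 'm) \<Rightarrow> 'm set" where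
  "dH1_cocycles G I1 I2 d1 = {x \<in> fixed_points G I1. d1 x = mzero I2}"

definition dH1_coboundaries :: "('g, 'b) monoid_scheme \<Rightarrow> ('g, 'm) qg_module \<Rightarrow> ('m \<Rightarrow> 'm) \<Rightarrow> 'm set" where
  "dH1_coboundaries G I0 d0 = d0 ` fixed_points G I0"

text \<open>Functions G/K \<rightarrow> Q are represented as functions on cosets (type 'g set \<Rightarrow> rat)
  vanishing outside the set of left cosets lcosets K.\<close>

definition coset_funs :: "('g, 'b) monoid_scheme \<Rightarrow> 'g set \<Rightarrow> ('g set \<Rightarrow> rat) set" where
  "coset_funs G K = {\<alpha>. \<forall>x. x \<notin> lcosets\<^bsub>G\<^esub> K \<longrightarrow> \<alpha> x = 0}"

definition coset_act :: "('g, 'b) monoid_scheme \<Rightarrow> 'g set \<Rightarrow> 'g \<Rightarrow> ('g set \<Rightarrow> rat) \<Rightarrow> ('g set \<Rightarrow> rat)" where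
  "coset_act G K g \<alpha> = (\<lambda>x. if x \<in> lcosets\<^bsub>G\<^esub> K then \<alpha> ((inv\<^bsub>G\<^esub> g) <#\<^bsub>G\<^esub> x) else 0)"

definition almost_equal :: "('a \<Rightarrow> rat) \<Rightarrow> ('a \<Rightarrow> rat) \<Rightarrow> bool" where
  "almost_equal \<alpha> \<beta> \<longleftrightarrow> finite {x. \<alpha> x \<noteq> \<beta> x}"

text \<open>Q[G/K] as the almost zero functions G/K \<rightarrow> Q, as a Q[G]-module.\<close>

definition QGK :: "('g, 'b) monoid_scheme \<Rightarrow> 'g set \<Rightarrow> ('g, 'g set \<Rightarrow> rat) qg_module" where
  "QGK G K = \<lparr> mcar = {\<alpha> \<in> coset_funs G K. almost_equal \<alpha> (\<lambda>_. 0)},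
              madd = (\<lambda>\<alpha> \<beta> x. \<alpha> x + \<beta> x), mzero = (\<lambda>_. 0),
              msmul = (\<lambda>q \<alpha> x. q * \<alpha> x), mact = coset_act G K \<rparr>"

definition AInv :: "('g, 'b) monoid_scheme \<Rightarrow> 'g set \<Rightarrow> ('g set \<Rightarrow> rat) set" where
  "AInv G K = {\<alpha> \<in> coset_funs G K.
      (\<forall>g\<in>carrier G. almost_equal (coset_act G K g \<alpha>) \<alpha>) \<and>
      (\<forall>k\<in>K. coset_act G K k \<alpha> = \<alpha>)}"

definition const_coset_funs :: "('g, 'b) monoid_scheme \<Rightarrow> 'g set \<Rightarrow> ('g set \<Rightarrow> rat) set" where
  "const_coset_funs G K = {\<alpha> \<in> coset_funs G K. \<exists>c. \<forall>x\<in>lcosets\<^bsub>G\<^esub> K. \<alpha> x = c}"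

definition QGK_fixed :: "('g, 'b) monoid_scheme \<Rightarrow> 'g set \<Rightarrow> ('g set \<Rightarrow> rat) set" where
  "QGK_fixed G K = {\<alpha> \<in> mcar (QGK G K). \<forall>k\<in>K. coset_act G K k \<alpha> = \<alpha>}"

text \<open>quotient_iso Z add smul B A W  states  Z/B \<cong> A/W  as Q-vector spaces, where
  Z is a subspace of a module with operations add, smul and A is a space of rational
  valued functions: there is a Q-linear map f : Z \<rightarrow> A inducing a bijection
  Z/B \<rightarrow> A/W (surjective modulo W, with f^{-1}(W) = B).  Every isomorphism of the
  quotients arises this way (lift along a linear section).\<close>

definition quotient_iso ::
  "'m set \<Rightarrow> ('m \<Rightarrow> 'm \<Rightarrow> 'm) \<Rightarrow> (rat \<Rightarrow> 'm \<Rightarrow> 'm) \<Rightarrow> 'm set \<Rightarrow>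
   ('a \<Rightarrow> rat) set \<Rightarrow> ('a \<Rightarrow> rat) set \<Rightarrow> bool" where
  "quotient_iso Z add smul B A W \<longleftrightarrow>
     (\<exists>f. (\<forall>z\<in>Z. f z \<in> A) \<and>
          (\<forall>x\<in>Z. \<forall>y\<in>Z. f (add x y) = (\<lambda>a. f x a + f y a)) \<and>
          (\<forall>q. \<forall>x\<in>Z. f (smul q x) = (\<lambda>a. q * f x a)) \<and>
          (\<forall>a\<in>A. \<exists>z\<in>Z. (\<lambda>b. a b - f z b) \<in> W) \<and>
          (\<forall>z\<in>Z. f z \<in> W \<longleftrightarrow> z \<in> B))"

end

theory Submission
  imports Defs "HOL-Library.Function_Algebras" "HOL-Library.Countable"
begin

(* A cocycle z = d0 y of the complex of G-fixed points gives, through g y - y in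
   ker d0 = \<epsilon>(Q[G/K]), a crossed homomorphism c : G -> Q[G/K].  It vanishes on the open
   stabiliser of y in K, so averaging over the finitely many cosets of that stabiliser in the
   compact group K modifies y until c vanishes on K; such a c is g |-> g \<alpha> - \<alpha> for the
   almost invariant function \<alpha>(xK) = c(x^-1)(K).  Conversely, for \<alpha> in AInv the
   injectivity of I0 extends \<epsilon> over the extension of Q by Q[G/K] twisted by g |-> g \<alpha> - \<alpha>,
   which produces such a y.  The function \<alpha> is determined by z up to C(G/K) + Q[G/K]^K, and
   z is a coboundary exactly when \<alpha> lies in that subspace. *)

(* Multiset's ASCII syntax for strict submultisets clashes with HOL-Algebra's left cosets. *)
no_notation (ASCII) subset_mset (infix \<open><#\<close> 50)

locale rat_vs =
  fixes M :: "('g, 'm) qg_module"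
  assumes rat_vector_space: "rat_vector_space M"
begin

lemma zero_closed [simp]: "mzero M \<in> mcar M"
  using rat_vector_space unfolding rat_vector_space_def by auto

lemma add_closed [simp]: "x \<in> mcar M \<Longrightarrow> y \<in> mcar M \<Longrightarrow> madd M x y \<in> mcar M"
  using rat_vector_space unfolding rat_vector_space_def by auto

lemma smul_closed [simp]: "x \<in> mcar M \<Longrightarrow> msmul M q x \<in> mcar M"
  using rat_vector_space unfolding rat_vector_space_def by auto

lemma add_assoc:
  "x \<in> mcar M \<Longrightarrow> y \<in> mcar M \<Longrightarrow> z \<in> mcar M \<Longrightarrow> madd M (madd M x y) z = madd M x (madd M y z)"
  using rat_vector_space unfolding rat_vector_space_def by auto

lemma add_commute: "x \<in> mcar M \<Longrightarrow> y \<in> mcar M \<Longrightarrow> madd M x y = madd M y x"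
  using rat_vector_space unfolding rat_vector_space_def by auto

lemma zero_add [simp]: "x \<in> mcar M \<Longrightarrow> madd M (mzero M) x = x"
  using rat_vector_space unfolding rat_vector_space_def by auto

lemma smul_add:
  "x \<in> mcar M \<Longrightarrow> y \<in> mcar M \<Longrightarrow> msmul M q (madd M x y) = madd M (msmul M q x) (msmul M q y)"
  using rat_vector_space unfolding rat_vector_space_def by auto

lemma add_smul: "x \<in> mcar M \<Longrightarrow> msmul M (p + q) x = madd M (msmul M p x) (msmul M q x)"
  using rat_vector_space unfolding rat_vector_space_def by auto

lemma smul_smul: "x \<in> mcar M \<Longrightarrow> msmul M (p * q) x = msmul M p (msmul M q x)"
  using rat_vector_space unfolding rat_vector_space_def by auto

lemma one_smul [simp]: "x \<in> mcar M \<Longrightarrow> msmul M 1 x = x"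
  using rat_vector_space unfolding rat_vector_space_def by auto

lemma add_zero [simp]: "x \<in> mcar M \<Longrightarrow> madd M x (mzero M) = x"
  using add_commute zero_add zero_closed by metis

lemma add_left_commute:
  "x \<in> mcar M \<Longrightarrow> y \<in> mcar M \<Longrightarrow> z \<in> mcar M \<Longrightarrow> madd M x (madd M y z) = madd M y (madd M x z)"
  by (metis add_assoc add_commute)

lemma add_add_add_swap:
  "a \<in> mcar M \<Longrightarrow> b \<in> mcar M \<Longrightarrow> c \<in> mcar M \<Longrightarrow> d \<in> mcar M \<Longrightarrow>
   madd M (madd M a b) (madd M c d) = madd M (madd M a c) (madd M b d)"
  by (simp add: add_assoc add_left_commute)

lemma add_right_cancel:
  assumes "a \<in> mcar M" "b \<in> mcar M" "c \<in> mcar M" "madd M a c = madd M b c"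
  shows "a = b"
proof -
  have "\<forall>x\<in>mcar M. \<exists>y\<in>mcar M. madd M x y = mzero M"
    using rat_vector_space unfolding rat_vector_space_def by blast
  then obtain w where w: "w \<in> mcar M" "madd M c w = mzero M"
    using assms(3) by blast
  have "a = madd M (madd M a c) w" using assms(1,3) w by (simp add: add_assoc)
  also have "\<dots> = b" using assms w by (simp add: add_assoc)
  finally show ?thesis .
qed

lemma zero_smul [simp]: "x \<in> mcar M \<Longrightarrow> msmul M 0 x = mzero M"
  using add_smul[of x 0 0] by (metis add_right_cancel add.right_neutral smul_closed zero_add zero_closed)

lemma smul_zero [simp]: "msmul M q (mzero M) = mzero M"
  by (metis zero_closed zero_smul smul_smul mult_zero_right)

lemma add_neg [simp]: "x \<in> mcar M \<Longrightarrow> madd M x (msmul M (-1) x) = mzero M"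
  by (metis add_smul one_smul zero_smul add.right_inverse)

lemma neg_add [simp]: "x \<in> mcar M \<Longrightarrow> madd M (msmul M (-1) x) x = mzero M"
  by (metis add_commute add_neg smul_closed)

end

lemma module_hom_closed: "module_hom G M N f \<Longrightarrow> x \<in> mcar M \<Longrightarrow> f x \<in> mcar N"
  unfolding module_hom_def by blast

lemma module_hom_add:
  "module_hom G M N f \<Longrightarrow> x \<in> mcar M \<Longrightarrow> y \<in> mcar M \<Longrightarrow> f (madd M x y) = madd N (f x) (f y)"
  unfolding module_hom_def by blast

lemma module_hom_smul: "module_hom G M N f \<Longrightarrow> x \<in> mcar M \<Longrightarrow> f (msmul M q x) = msmul N q (f x)"
  unfolding module_hom_def by blast

lemma module_hom_act:
  "module_hom G M N f \<Longrightarrow> g \<in> carrier G \<Longrightarrow> x \<in> mcar M \<Longrightarrow> f (mact M g x) = mact N g (f x)"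
  unfolding module_hom_def by blast

lemma qg_module_rat_vs: "qg_module G M \<Longrightarrow> rat_vs M"
  unfolding qg_module_def rat_vs_def by blast

lemma qg_module_act_closed: "qg_module G M \<Longrightarrow> g \<in> carrier G \<Longrightarrow> x \<in> mcar M \<Longrightarrow> mact M g x \<in> mcar M"
  unfolding qg_module_def by blast

lemma qg_module_act_add: "qg_module G M \<Longrightarrow> g \<in> carrier G \<Longrightarrow> x \<in> mcar M \<Longrightarrow> y \<in> mcar M \<Longrightarrow>
   mact M g (madd M x y) = madd M (mact M g x) (mact M g y)"
  unfolding qg_module_def by blast

lemma qg_module_act_smul: "qg_module G M \<Longrightarrow> g \<in> carrier G \<Longrightarrow> x \<in> mcar M \<Longrightarrow>
   mact M g (msmul M q x) = msmul M q (mact M g x)"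
  unfolding qg_module_def by blast

lemma qg_module_act_one: "qg_module G M \<Longrightarrow> x \<in> mcar M \<Longrightarrow> mact M \<one>\<^bsub>G\<^esub> x = x"
  unfolding qg_module_def by blast

lemma qg_module_act_mult: "qg_module G M \<Longrightarrow> g \<in> carrier G \<Longrightarrow> h \<in> carrier G \<Longrightarrow> x \<in> mcar M \<Longrightarrow>
   mact M (g \<otimes>\<^bsub>G\<^esub> h) x = mact M g (mact M h x)"
  unfolding qg_module_def by blast

lemma (in group) qg_module_stabiliser_subgroup:
  assumes M: "qg_module G M" and x: "x \<in> mcar M"
  shows "subgroup {g \<in> carrier G. mact M g x = x} G"
proof (rule subgroupI)
  show "{g \<in> carrier G. mact M g x = x} \<noteq> {}"
    using qg_module_act_one[OF M x] by blast
  fix a assume a: "a \<in> {g \<in> carrier G. mact M g x = x}"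
  have "mact M (inv a) x = mact M (inv a) (mact M a x)" using a by simp
  also have "\<dots> = x" using a x qg_module_act_mult[OF M, of "inv a" a x, symmetric] qg_module_act_one[OF M x]
    by simp
  finally show "inv a \<in> {g \<in> carrier G. mact M g x = x}" using a by simp
  fix b assume "b \<in> {g \<in> carrier G. mact M g x = x}"
  then show "a \<otimes> b \<in> {g \<in> carrier G. mact M g x = x}" using a x qg_module_act_mult[OF M] by simp
qed auto

lemma discrete_submodule:
  assumes D: "discrete_module G T N" and S: "S \<subseteq> mcar N" "mzero N \<in> S"
    "\<And>x y. x \<in> S \<Longrightarrow> y \<in> S \<Longrightarrow> madd N x y \<in> S"
    "\<And>q x. x \<in> S \<Longrightarrow> msmul N q x \<in> S"
    "\<And>g x. g \<in> carrier G \<Longrightarrow> x \<in> S \<Longrightarrow> mact N g x \<in> S"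
  shows "discrete_module G T (N\<lparr>mcar := S\<rparr>)"
proof -
  have Q: "qg_module G N" using D unfolding discrete_module_def by blast
  interpret N: rat_vs N using qg_module_rat_vs[OF Q] .
  have sub: "x \<in> S \<Longrightarrow> x \<in> mcar N" for x using S by blast
  have e: "mcar (N\<lparr>mcar := S\<rparr>) = S" "madd (N\<lparr>mcar := S\<rparr>) = madd N"
    "msmul (N\<lparr>mcar := S\<rparr>) = msmul N" "mzero (N\<lparr>mcar := S\<rparr>) = mzero N"
    "mact (N\<lparr>mcar := S\<rparr>) = mact N" by simp_all
  have rv: "rat_vector_space (N\<lparr>mcar := S\<rparr>)"
    unfolding rat_vector_space_def
  proof (simp only: e, intro conjI ballI allI)
    fix x assume x: "x \<in> S"
    show "\<exists>y\<in>S. madd N x y = mzero N"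
      by (rule bexI[of _ "msmul N (-1) x"]) (use x sub S in auto)
  qed (use S sub in \<open>auto simp: N.add_assoc N.smul_add N.add_smul N.smul_smul intro: N.add_commute\<close>)
  have "qg_module G (N\<lparr>mcar := S\<rparr>)"
    unfolding qg_module_def
    by (simp only: e, intro conjI ballI allI rv)
       (use S sub in \<open>auto simp: qg_module_act_add[OF Q] qg_module_act_smul[OF Q]
          qg_module_act_one[OF Q] qg_module_act_mult[OF Q]\<close>)
  then show ?thesis using D sub unfolding discrete_module_def by simp
qed

definition transport_module :: "('x \<Rightarrow> 'm) \<Rightarrow> ('g, 'x) qg_module \<Rightarrow> ('g, 'm) qg_module" where
  "transport_module j N = \<lparr>mcar = j ` mcar N,
     madd = (\<lambda>a b. j (madd N (inv_into (mcar N) j a) (inv_into (mcar N) j b))),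
     mzero = j (mzero N),
     msmul = (\<lambda>q a. j (msmul N q (inv_into (mcar N) j a))),
     mact = (\<lambda>g a. j (mact N g (inv_into (mcar N) j a)))\<rparr>"

context
  fixes j :: "'x \<Rightarrow> 'm" and N :: "('g, 'x) qg_module"
  assumes inj: "inj_on j (mcar N)"
begin

lemma transport_module_simps:
  "mcar (transport_module j N) = j ` mcar N"
  "mzero (transport_module j N) = j (mzero N)"
  "x \<in> mcar N \<Longrightarrow> y \<in> mcar N \<Longrightarrow> madd (transport_module j N) (j x) (j y) = j (madd N x y)"
  "x \<in> mcar N \<Longrightarrow> msmul (transport_module j N) q (j x) = j (msmul N q x)"
  "x \<in> mcar N \<Longrightarrow> mact (transport_module j N) g (j x) = j (mact N g x)"
  using inj by (simp_all add: transport_module_def)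

lemma discrete_module_transport:
  assumes D: "discrete_module G T N"
  shows "discrete_module G T (transport_module j N)"
proof -
  have Q: "qg_module G N" using D unfolding discrete_module_def by blast
  interpret N: rat_vs N using qg_module_rat_vs[OF Q] .
  note S = transport_module_simps
  have rv: "rat_vector_space (transport_module j N)"
    unfolding rat_vector_space_def
  proof (intro conjI)
    show "\<forall>x\<in>mcar (transport_module j N). \<exists>y\<in>mcar (transport_module j N).
        madd (transport_module j N) x y = mzero (transport_module j N)"
    proof
      fix a assume "a \<in> mcar (transport_module j N)"
      then obtain x where x: "x \<in> mcar N" "a = j x" by (auto simp: S)
      show "\<exists>y\<in>mcar (transport_module j N). madd (transport_module j N) a y = mzero (transport_module j N)"
        by (rule bexI[of _ "j (msmul N (-1) x)"]) (use x in \<open>auto simp: S\<close>)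
    qed
  qed (auto simp: S N.add_assoc N.smul_add N.add_smul N.smul_smul intro!: arg_cong[where f=j] N.add_commute)
  have qg: "qg_module G (transport_module j N)"
    unfolding qg_module_def
    by (intro conjI rv)
       (auto simp: S qg_module_act_closed[OF Q] qg_module_act_add[OF Q] qg_module_act_smul[OF Q]
          qg_module_act_one[OF Q] qg_module_act_mult[OF Q])
  have "openin T {g \<in> carrier G. mact (transport_module j N) g a = a}"
    if a: "a \<in> mcar (transport_module j N)" for a
  proof -
    obtain x where x: "x \<in> mcar N" "a = j x" using a by (auto simp: S)
    have "{g \<in> carrier G. mact (transport_module j N) g a = a} = {g \<in> carrier G. mact N g x = x}"
      using x inj qg_module_act_closed[OF Q] by (auto simp: S inj_on_eq_iff)
    then show ?thesis using D x unfolding discrete_module_def by simp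
  qed
  then show ?thesis using qg unfolding discrete_module_def by blast
qed

lemma module_hom_from_transport:
  assumes Q: "qg_module G N" and h: "module_hom G N P \<phi>"
  shows "module_hom G (transport_module j N) P (\<lambda>a. \<phi> (inv_into (mcar N) j a))"
  unfolding module_hom_def transport_module_simps
proof (intro conjI ballI allI; elim imageE; clarify)
  fix x y assume "x \<in> mcar N" "y \<in> mcar N"
  then show "\<phi> (inv_into (mcar N) j (madd (transport_module j N) (j x) (j y))) =
      madd P (\<phi> (inv_into (mcar N) j (j x))) (\<phi> (inv_into (mcar N) j (j y)))"
    using h inj qg_module_rat_vs[OF Q] by (simp add: transport_module_simps module_hom_add rat_vs.add_closed)
qed (use h inj Q in \<open>auto simp: transport_module_simps module_hom_closed module_hom_smul module_hom_act
       qg_module_act_closed rat_vs.smul_closed qg_module_rat_vs\<close>)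

lemma module_hom_to_transport:
  assumes h: "module_hom G (transport_module j N) P h"
  shows "module_hom G N P (\<lambda>x. h (j x))"
  using h unfolding module_hom_def transport_module_simps
  by (metis imageI transport_module_simps(3-5))

end

lemma module_hom_transport_submodule:
  assumes inj: "inj_on j (mcar N)" and S: "S \<subseteq> mcar N"
  shows "module_hom G (transport_module j (N\<lparr>mcar := S\<rparr>)) (transport_module j N) id"
proof -
  have inj_S: "inj_on j (mcar (N\<lparr>mcar := S\<rparr>))" using inj S by (simp add: inj_on_subset)
  show ?thesis
    unfolding module_hom_def using S
    by (auto simp: transport_module_simps[OF inj] transport_module_simps[OF inj_S] subsetD[OF S])
qed

text \<open>Injectivity is only postulated against modules with carrier in the type 'm of I, so E and
  its submodule are first transported into 'm along j.\<close>

lemma injective_discrete_module_extend: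
  fixes I :: "('g, 'm) qg_module" and j :: "'x \<Rightarrow> 'm"
  assumes I: "injective_discrete_module G T I"
    and E: "discrete_module G T E" "discrete_module G T (E\<lparr>mcar := S\<rparr>)" "S \<subseteq> mcar E"
    and j: "inj_on j (mcar E)"
    and f: "module_hom G (E\<lparr>mcar := S\<rparr>) I f"
  shows "\<exists>H. module_hom G E I H \<and> (\<forall>p\<in>S. H p = f p)"
proof -
  let ?E0 = "E\<lparr>mcar := S\<rparr>"
  have j0: "inj_on j (mcar ?E0)" using j E(3) by (simp add: inj_on_subset)
  have "qg_module G ?E0" using E(2) unfolding discrete_module_def by blast
  from module_hom_from_transport[OF j0 this f]
  have f': "module_hom G (transport_module j ?E0) I (\<lambda>a. f (inv_into (mcar ?E0) j a))" .
  have "\<And>(A :: ('g, 'm) qg_module) (B :: ('g, 'm) qg_module) i f. discrete_module G T A \<Longrightarrow>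
      discrete_module G T B \<Longrightarrow> module_hom G A B i \<Longrightarrow> inj_on i (mcar A) \<Longrightarrow> module_hom G A I f \<Longrightarrow>
      \<exists>h. module_hom G B I h \<and> (\<forall>a\<in>mcar A. h (i a) = f a)"
    using I unfolding injective_discrete_module_def by blast
  from this[OF discrete_module_transport[OF j0 E(2)] discrete_module_transport[OF j E(1)]
      module_hom_transport_submodule[OF j E(3)] inj_on_id f']
  obtain h where h: "module_hom G (transport_module j E) I h"
    "\<forall>a\<in>mcar (transport_module j ?E0). h (id a) = f (inv_into (mcar ?E0) j a)"
    by blast
  have "module_hom G E I (\<lambda>p. h (j p))" using module_hom_to_transport[OF j h(1)] .
  moreover have "h (j p) = f p" if "p \<in> S" for p
    using h(2) j0 that by (simp add: transport_module_simps(1)[OF j0])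
  ultimately show ?thesis by blast
qed

section \<open>Topological groups\<close>

lemma (in group) topspace_eq_carrier: "topological_group G T \<Longrightarrow> topspace T = carrier G"
  unfolding topological_group_def by blast

lemma (in group) openin_lcoset:
  assumes topological_group: "topological_group G T" and s: "s \<in> carrier G" and U: "openin T U"
  shows "openin T (s <# U)"
proof -
  have U_sub: "U \<subseteq> carrier G" using openin_subset[OF U] topspace_eq_carrier[OF topological_group] by simp
  have "continuous_map T (prod_topology T T) (\<lambda>x. (inv s, x))"
    by (intro continuous_map_pairedI continuous_map_const[THEN iffD2] continuous_map_id[unfolded id_def])
       (simp add: topspace_eq_carrier[OF topological_group] s)
  moreover have "continuous_map (prod_topology T T) T (\<lambda>(x, y). x \<otimes> y)"
    using topological_group unfolding topological_group_def by blast
  ultimately have c: "continuous_map T T (\<lambda>x. inv s \<otimes> x)"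
    using continuous_map_compose by (fastforce simp: o_def)
  have "s <# U = {x \<in> topspace T. inv s \<otimes> x \<in> U}"
  proof safe
    fix x assume "x \<in> s <# U"
    then obtain u where u: "u \<in> U" "x = s \<otimes> u" unfolding l_coset_def by blast
    then show "x \<in> topspace T" using U_sub s topspace_eq_carrier[OF topological_group] by auto
    show "inv s \<otimes> x \<in> U" using u U_sub s by (auto simp: m_assoc[symmetric])
  next
    fix x assume x: "x \<in> topspace T" "inv s \<otimes> x \<in> U"
    then have "x = s \<otimes> (inv s \<otimes> x)" using s topspace_eq_carrier[OF topological_group] by (simp add: m_assoc[symmetric])
    then show "x \<in> s <# U" using x unfolding l_coset_def by blast
  qed
  then show ?thesis using openin_continuous_map_preimage[OF c U] by simp
qed

lemma (in group) openin_if_right_mult_closed: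
  assumes topological_group: "topological_group G T" and U: "openin T U" "\<one> \<in> U"
    and S: "S \<subseteq> carrier G" "\<And>s u. s \<in> S \<Longrightarrow> u \<in> U \<Longrightarrow> s \<otimes> u \<in> S"
  shows "openin T S"
proof -
  have "S = (\<Union>s\<in>S. s <# U)"
  proof safe
    fix s assume "s \<in> S"
    then have "s = s \<otimes> \<one>" "s \<in> carrier G" using S by auto
    then show "s \<in> (\<Union>s\<in>S. s <# U)" using \<open>s \<in> S\<close> U unfolding l_coset_def by blast
  next
    fix x s assume "s \<in> S" "x \<in> s <# U"
    then show "x \<in> S" using S unfolding l_coset_def by blast
  qed
  moreover have "openin T (\<Union>s\<in>S. s <# U)"
    using openin_lcoset[OF topological_group] U S by (intro openin_Union) auto
  ultimately show ?thesis by simp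
qed

lemma (in group) finite_lcosets_in_compact:
  assumes topological_group: "topological_group G T" and U: "subgroup U G" "openin T U" "U \<subseteq> K"
    and K: "subgroup K G" "compactin T K"
  shows "finite ((\<lambda>k. k <# U) ` K)"
proof -
  let ?C = "(\<lambda>k. k <# U) ` K"
  have K_sub: "K \<subseteq> carrier G" using K(1) subgroup.subset by blast
  have "\<forall>V\<in>?C. openin T V" using openin_lcoset[OF topological_group _ U(2)] K_sub by blast
  moreover have "K \<subseteq> \<Union>?C" using lcos_self[OF _ U(1)] K_sub by blast
  ultimately obtain F where F: "finite F" "F \<subseteq> ?C" "K \<subseteq> \<Union>F"
    using K(2) unfolding compactin_def by meson
  have "?C \<subseteq> F"
  proof
    fix X assume "X \<in> ?C"
    then obtain k where k: "k \<in> K" "X = k <# U" by blast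
    then obtain Y where Y: "Y \<in> F" "k \<in> Y" using F by blast
    then obtain k' where k': "k' \<in> K" "Y = k' <# U" using F by blast
    have "k' <# U = k <# U" using l_repr_independence[of k k' U] Y k' K_sub U(1) by blast
    then show "X \<in> F" using k Y k' by simp
  qed
  then show ?thesis using F finite_subset by blast
qed

definition fscale :: "rat \<Rightarrow> ('x \<Rightarrow> rat) \<Rightarrow> 'x \<Rightarrow> rat" where
  "fscale q f = (\<lambda>x. q * f x)"

lemma fscale_add: "fscale q (a + b) = fscale q a + fscale q b"
  by (simp add: fscale_def fun_eq_iff algebra_simps)

lemma fscale_diff: "fscale q (a - b) = fscale q a - fscale q b"
  by (simp add: fscale_def fun_eq_iff algebra_simps)

lemma fscale_zero_left [simp]: "fscale 0 f = 0"
  by (simp add: fscale_def fun_eq_iff)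

lemma fscale_zero_right [simp]: "fscale q 0 = 0"
  by (simp add: fscale_def fun_eq_iff)

lemma diff_eq_add_fscale: "a - b = a + fscale (-1) b"
  by (simp add: fscale_def fun_eq_iff)

locale coset_space = group +
  fixes K :: "'a set"
  assumes subgroup_K: "subgroup K G"
begin

abbreviation QGK_car :: "('a set \<Rightarrow> rat) set" where
  "QGK_car \<equiv> mcar (QGK G K)"

lemma K_subset: "K \<subseteq> carrier G"
  using subgroup_K subgroup.subset by blast

lemma lcoset_in_lcosets: "x \<in> carrier G \<Longrightarrow> x <# K \<in> lcosets K"
  unfolding LCOSETS_def by blast

lemma lcosetsE:
  assumes "X \<in> lcosets K"
  obtains x where "x \<in> carrier G" "X = x <# K"
  using assms unfolding LCOSETS_def by blast

lemma K_in_lcosets: "K \<in> lcosets K"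
  using lcoset_in_lcosets[of \<one>] lcos_mult_one[OF K_subset] by simp

lemma lcoset_mult: "g \<in> carrier G \<Longrightarrow> x \<in> carrier G \<Longrightarrow> g <# (x <# K) = (g \<otimes> x) <# K"
  using lcos_m_assoc K_subset by blast

lemma lcosets_mult_closed: "g \<in> carrier G \<Longrightarrow> X \<in> lcosets K \<Longrightarrow> g <# X \<in> lcosets K"
  by (metis lcosetsE lcoset_mult lcoset_in_lcosets m_closed)

lemma coset_act_lcoset:
  "g \<in> carrier G \<Longrightarrow> x \<in> carrier G \<Longrightarrow> coset_act G K g \<alpha> (x <# K) = \<alpha> ((inv g \<otimes> x) <# K)"
  unfolding coset_act_def using lcoset_in_lcosets lcoset_mult by simp

lemma coset_act_in_coset_funs [simp]: "coset_act G K g \<alpha> \<in> coset_funs G K"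
  unfolding coset_act_def coset_funs_def by simp

lemma coset_act_mult:
  assumes "g \<in> carrier G" "h \<in> carrier G"
  shows "coset_act G K (g \<otimes> h) \<alpha> = coset_act G K g (coset_act G K h \<alpha>)"
proof
  fix X
  show "coset_act G K (g \<otimes> h) \<alpha> X = coset_act G K g (coset_act G K h \<alpha>) X"
  proof (cases "X \<in> lcosets K")
    case True
    then obtain x where x: "x \<in> carrier G" "X = x <# K" by (rule lcosetsE)
    have "coset_act G K (g \<otimes> h) \<alpha> X = \<alpha> ((inv (g \<otimes> h) \<otimes> x) <# K)"
      using x assms coset_act_lcoset by simp
    also have "\<dots> = \<alpha> ((inv h \<otimes> (inv g \<otimes> x)) <# K)"
      using assms x by (simp add: inv_mult_group m_assoc)
    also have "\<dots> = coset_act G K g (coset_act G K h \<alpha>) X"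
      using x assms coset_act_lcoset by simp
    finally show ?thesis .
  qed (simp add: coset_act_def)
qed

lemma coset_act_one: "\<alpha> \<in> coset_funs G K \<Longrightarrow> coset_act G K \<one> \<alpha> = \<alpha>"
  by (auto simp: fun_eq_iff coset_act_def coset_funs_def lcoset_mult[of \<one>] elim!: lcosetsE)

lemma coset_act_add: "coset_act G K g (\<alpha> + \<beta>) = coset_act G K g \<alpha> + coset_act G K g \<beta>"
  unfolding coset_act_def by (auto simp: fun_eq_iff)

lemma coset_act_diff: "coset_act G K g (\<alpha> - \<beta>) = coset_act G K g \<alpha> - coset_act G K g \<beta>"
  unfolding coset_act_def by (auto simp: fun_eq_iff)

lemma coset_act_fscale: "coset_act G K g (fscale q \<alpha>) = fscale q (coset_act G K g \<alpha>)"
  unfolding coset_act_def fscale_def by (auto simp: fun_eq_iff)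

lemma coset_act_zero [simp]: "coset_act G K g 0 = 0"
  unfolding coset_act_def by (auto simp: fun_eq_iff)

lemma coset_funs_add: "\<alpha> \<in> coset_funs G K \<Longrightarrow> \<beta> \<in> coset_funs G K \<Longrightarrow> \<alpha> + \<beta> \<in> coset_funs G K"
  unfolding coset_funs_def by simp

lemma coset_funs_diff: "\<alpha> \<in> coset_funs G K \<Longrightarrow> \<beta> \<in> coset_funs G K \<Longrightarrow> \<alpha> - \<beta> \<in> coset_funs G K"
  unfolding coset_funs_def by simp

lemma coset_funs_fscale: "\<alpha> \<in> coset_funs G K \<Longrightarrow> fscale q \<alpha> \<in> coset_funs G K"
  unfolding coset_funs_def fscale_def by simp

lemma coset_funs_zero [simp]: "0 \<in> coset_funs G K"
  unfolding coset_funs_def by simp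

lemma const_coset_funs_invariant:
  assumes "\<alpha> \<in> const_coset_funs G K" "g \<in> carrier G"
  shows "coset_act G K g \<alpha> = \<alpha>"
  using assms lcosets_mult_closed[of "inv g"]
  unfolding const_coset_funs_def coset_funs_def coset_act_def by (auto simp: fun_eq_iff)

lemma invariant_imp_const_coset_funs:
  assumes "\<alpha> \<in> coset_funs G K" "\<And>g. g \<in> carrier G \<Longrightarrow> coset_act G K g \<alpha> = \<alpha>"
  shows "\<alpha> \<in> const_coset_funs G K"
proof -
  have "\<alpha> X = \<alpha> K" if "X \<in> lcosets K" for X
  proof -
    obtain x where x: "x \<in> carrier G" "X = x <# K" using \<open>X \<in> lcosets K\<close> by (rule lcosetsE)
    then have "\<alpha> X = coset_act G K x \<alpha> X" using assms by simp
    also have "\<dots> = \<alpha> K" using coset_act_lcoset[of x x \<alpha>] x lcos_mult_one[OF K_subset] by simp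
    finally show ?thesis .
  qed
  then show ?thesis using assms unfolding const_coset_funs_def by blast
qed

lemma QGK_car_iff: "\<alpha> \<in> QGK_car \<longleftrightarrow> \<alpha> \<in> coset_funs G K \<and> finite {x. \<alpha> x \<noteq> 0}"
  unfolding QGK_def almost_equal_def by simp

lemma QGK_simps:
  "madd (QGK G K) = (+)" "msmul (QGK G K) = fscale" "mzero (QGK G K) = 0" "mact (QGK G K) = coset_act G K"
  unfolding QGK_def fscale_def by (auto simp: fun_eq_iff)

lemma QGK_car_coset_funs: "\<alpha> \<in> QGK_car \<Longrightarrow> \<alpha> \<in> coset_funs G K"
  unfolding QGK_car_iff by simp

lemma QGK_car_zero [simp]: "0 \<in> QGK_car"
  unfolding QGK_car_iff by simp

lemma QGK_car_add: "\<alpha> \<in> QGK_car \<Longrightarrow> \<beta> \<in> QGK_car \<Longrightarrow> \<alpha> + \<beta> \<in> QGK_car"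
  unfolding QGK_car_iff using coset_funs_add
  by (auto elim!: rev_finite_subset[OF finite_UnI[of "{x. \<alpha> x \<noteq> 0}" "{x. \<beta> x \<noteq> 0}"]])

lemma QGK_car_diff: "\<alpha> \<in> QGK_car \<Longrightarrow> \<beta> \<in> QGK_car \<Longrightarrow> \<alpha> - \<beta> \<in> QGK_car"
  unfolding QGK_car_iff using coset_funs_diff
  by (auto elim!: rev_finite_subset[OF finite_UnI[of "{x. \<alpha> x \<noteq> 0}" "{x. \<beta> x \<noteq> 0}"]])

lemma QGK_car_fscale: "\<alpha> \<in> QGK_car \<Longrightarrow> fscale q \<alpha> \<in> QGK_car"
  unfolding QGK_car_iff using coset_funs_fscale by (auto simp: fscale_def elim!: rev_finite_subset)

lemma QGK_car_sum:
  "finite S \<Longrightarrow> (\<And>i. i \<in> S \<Longrightarrow> f i \<in> QGK_car) \<Longrightarrow> (\<lambda>x. \<Sum>i\<in>S. f i x) \<in> QGK_car"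
proof (induction S rule: finite_induct)
  case (insert a F)
  have "(\<lambda>x. \<Sum>i\<in>insert a F. f i x) = f a + (\<lambda>x. \<Sum>i\<in>F. f i x)"
    using insert by (simp add: fun_eq_iff)
  then show ?case using insert QGK_car_add by simp
qed (simp add: zero_fun_def[symmetric])

lemma QGK_car_act:
  assumes g: "g \<in> carrier G" and \<alpha>: "\<alpha> \<in> QGK_car"
  shows "coset_act G K g \<alpha> \<in> QGK_car"
proof -
  have "{X. coset_act G K g \<alpha> X \<noteq> 0} \<subseteq> (\<lambda>Y. g <# Y) ` {Y. \<alpha> Y \<noteq> 0}"
  proof
    fix X assume X: "X \<in> {X. coset_act G K g \<alpha> X \<noteq> 0}"
    then have "X \<in> lcosets K" unfolding coset_act_def by (auto split: if_splits)
    then obtain x where x: "x \<in> carrier G" "X = x <# K" by (rule lcosetsE)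
    have "X = g <# (inv g <# X)"
      using g x by (simp add: lcoset_mult m_assoc[symmetric])
    moreover have "\<alpha> (inv g <# X) \<noteq> 0" using X \<open>X \<in> lcosets K\<close> unfolding coset_act_def by simp
    ultimately show "X \<in> (\<lambda>Y. g <# Y) ` {Y. \<alpha> Y \<noteq> 0}" by blast
  qed
  then show ?thesis using \<alpha> unfolding QGK_car_iff by (auto elim: finite_subset)
qed

lemma QGK_fixed_iff: "\<beta> \<in> QGK_fixed G K \<longleftrightarrow> \<beta> \<in> QGK_car \<and> (\<forall>k\<in>K. coset_act G K k \<beta> = \<beta>)"
  unfolding QGK_fixed_def by simp

lemma AInv_coset_funs: "\<alpha> \<in> AInv G K \<Longrightarrow> \<alpha> \<in> coset_funs G K"
  unfolding AInv_def by blast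

lemma AInv_K_invariant: "\<alpha> \<in> AInv G K \<Longrightarrow> k \<in> K \<Longrightarrow> coset_act G K k \<alpha> = \<alpha>"
  unfolding AInv_def by blast

lemma AInv_act_diff: "\<alpha> \<in> AInv G K \<Longrightarrow> g \<in> carrier G \<Longrightarrow> coset_act G K g \<alpha> - \<alpha> \<in> QGK_car"
  unfolding AInv_def QGK_car_iff almost_equal_def by (auto intro: coset_funs_diff)

lemma AInvI:
  assumes "\<alpha> \<in> coset_funs G K" "\<And>g. g \<in> carrier G \<Longrightarrow> coset_act G K g \<alpha> - \<alpha> \<in> QGK_car"
    "\<And>k. k \<in> K \<Longrightarrow> coset_act G K k \<alpha> = \<alpha>"
  shows "\<alpha> \<in> AInv G K"
  using assms unfolding AInv_def QGK_car_iff almost_equal_def by auto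

lemma AInv_add: "\<alpha> \<in> AInv G K \<Longrightarrow> \<beta> \<in> AInv G K \<Longrightarrow> \<alpha> + \<beta> \<in> AInv G K"
proof (rule AInvI)
  fix g assume "\<alpha> \<in> AInv G K" "\<beta> \<in> AInv G K" "g \<in> carrier G"
  moreover have "coset_act G K g (\<alpha> + \<beta>) - (\<alpha> + \<beta>) = (coset_act G K g \<alpha> - \<alpha>) + (coset_act G K g \<beta> - \<beta>)"
    by (simp add: coset_act_add)
  ultimately show "coset_act G K g (\<alpha> + \<beta>) - (\<alpha> + \<beta>) \<in> QGK_car"
    using AInv_act_diff QGK_car_add by metis
qed (auto simp: AInv_coset_funs coset_funs_add coset_act_add AInv_K_invariant)

lemma AInv_fscale: "\<alpha> \<in> AInv G K \<Longrightarrow> fscale q \<alpha> \<in> AInv G K"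
proof (rule AInvI)
  fix g assume "\<alpha> \<in> AInv G K" "g \<in> carrier G"
  moreover have "coset_act G K g (fscale q \<alpha>) - fscale q \<alpha> = fscale q (coset_act G K g \<alpha> - \<alpha>)"
    by (simp only: coset_act_fscale fscale_diff)
  ultimately show "coset_act G K g (fscale q \<alpha>) - fscale q \<alpha> \<in> QGK_car"
    using AInv_act_diff QGK_car_fscale by metis
qed (auto simp: AInv_coset_funs coset_funs_fscale coset_act_fscale AInv_K_invariant)

lemma AInv_zero: "0 \<in> AInv G K"
  by (rule AInvI) auto

lemma AInv_diff: "\<alpha> \<in> AInv G K \<Longrightarrow> \<beta> \<in> AInv G K \<Longrightarrow> \<alpha> - \<beta> \<in> AInv G K"
  unfolding diff_eq_add_fscale by (intro AInv_add AInv_fscale)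

lemma const_coset_funs_AInv: "c \<in> const_coset_funs G K \<Longrightarrow> c \<in> AInv G K"
  by (rule AInvI) (auto simp: const_coset_funs_invariant const_coset_funs_def K_subset[THEN subsetD])

lemma QGK_fixed_AInv: "\<beta> \<in> QGK_fixed G K \<Longrightarrow> \<beta> \<in> AInv G K"
  by (rule AInvI) (auto simp: QGK_fixed_iff QGK_car_coset_funs QGK_car_act QGK_car_diff)

definition const_plus_fixed :: "('a set \<Rightarrow> rat) set" where
  "const_plus_fixed = {(\<lambda>x. c x + \<beta> x) |c \<beta>. c \<in> const_coset_funs G K \<and> \<beta> \<in> QGK_fixed G K}"

lemma const_plus_fixed_iff:
  "w \<in> const_plus_fixed \<longleftrightarrow> (\<exists>c \<beta>. c \<in> const_coset_funs G K \<and> \<beta> \<in> QGK_fixed G K \<and> w = c + \<beta>)"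
  unfolding const_plus_fixed_def by (auto simp: plus_fun_def)

lemma const_plus_fixed_zero: "0 \<in> const_plus_fixed"
proof -
  have "0 \<in> const_coset_funs G K" "0 \<in> QGK_fixed G K"
    unfolding const_coset_funs_def QGK_fixed_iff by auto
  then show ?thesis unfolding const_plus_fixed_iff by force
qed

lemma const_plus_fixed_add: "v \<in> const_plus_fixed \<Longrightarrow> w \<in> const_plus_fixed \<Longrightarrow> v + w \<in> const_plus_fixed"
proof (unfold const_plus_fixed_iff, elim exE conjE)
  fix c \<beta> d \<gamma> assume "c \<in> const_coset_funs G K" "\<beta> \<in> QGK_fixed G K" "v = c + \<beta>"
    "d \<in> const_coset_funs G K" "\<gamma> \<in> QGK_fixed G K" "w = d + \<gamma>"
  moreover have "c + d \<in> const_coset_funs G K" "\<beta> + \<gamma> \<in> QGK_fixed G K"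
    using calculation unfolding const_coset_funs_def QGK_fixed_iff
    by (auto simp: coset_funs_add QGK_car_add coset_act_add)
  ultimately show "\<exists>c \<beta>. c \<in> const_coset_funs G K \<and> \<beta> \<in> QGK_fixed G K \<and> v + w = c + \<beta>"
    by (intro exI[of _ "c + d"] exI[of _ "\<beta> + \<gamma>"]) (simp add: algebra_simps)
qed

lemma const_plus_fixed_fscale: "w \<in> const_plus_fixed \<Longrightarrow> fscale q w \<in> const_plus_fixed"
proof (unfold const_plus_fixed_iff, elim exE conjE)
  fix c \<beta> assume "c \<in> const_coset_funs G K" "\<beta> \<in> QGK_fixed G K" "w = c + \<beta>"
  moreover have "fscale q c \<in> const_coset_funs G K" "fscale q \<beta> \<in> QGK_fixed G K"
    using calculation unfolding const_coset_funs_def QGK_fixed_iff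
    by (auto simp: coset_funs_fscale QGK_car_fscale coset_act_fscale) (auto simp: fscale_def)
  ultimately show "\<exists>c \<beta>. c \<in> const_coset_funs G K \<and> \<beta> \<in> QGK_fixed G K \<and> fscale q w = c + \<beta>"
    by (intro exI[of _ "fscale q c"] exI[of _ "fscale q \<beta>"]) (simp add: fscale_add)
qed

lemma const_plus_fixed_subset_AInv: "const_plus_fixed \<subseteq> AInv G K"
  using const_coset_funs_AInv QGK_fixed_AInv AInv_add by (auto simp: const_plus_fixed_iff)

end
section \<open>Crossed homomorphisms G \<rightarrow> Q[G/K]\<close>

lemma (in group) lcoset_mult_permutes_lcosets:
  assumes U: "subgroup U G" "U \<subseteq> K" and K: "subgroup K G" and k: "k \<in> K"
  shows "bij_betw (\<lambda>X. k <# X) ((\<lambda>k'. k' <# U) ` K) ((\<lambda>k'. k' <# U) ` K)"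
proof -
  let ?C = "(\<lambda>k'. k' <# U) ` K"
  have K_sub: "K \<subseteq> carrier G" using K subgroup.subset by blast
  have U_sub: "U \<subseteq> carrier G" using U subgroup.subset by blast
  have kG: "k \<in> carrier G" using k K_sub by blast
  have kK': "inv k \<in> K" using subgroup.m_inv_closed[OF K k] .
  have mult: "h <# (k' <# U) = (h \<otimes> k') <# U" if "h \<in> carrier G" "k' \<in> carrier G" for h k'
    using lcos_m_assoc[OF U_sub that] .
  have maps: "h <# X \<in> ?C" if h: "h \<in> K" and X: "X \<in> ?C" for h X
  proof -
    obtain k' where k': "k' \<in> K" "X = k' <# U" using X by blast
    have "h <# X = (h \<otimes> k') <# U" using mult[of h k'] h k' K_sub by (simp add: subsetD)
    then show ?thesis using subgroup.m_closed[OF K h k'(1)] by simp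
  qed
  have cancel: "h <# (h' <# X) = X"
    if hh': "h \<in> carrier G" "h' \<in> carrier G" "h \<otimes> h' = \<one>" and X: "X \<in> ?C" for h h' X
  proof -
    obtain k' where k': "k' \<in> K" "X = k' <# U" using X by blast
    then have k'G: "k' \<in> carrier G" using K_sub by blast
    have "h <# (h' <# X) = (h \<otimes> (h' \<otimes> k')) <# U" using mult k'(2) k'G hh'(1,2) by simp
    also have "h \<otimes> (h' \<otimes> k') = k'" using hh' k'G by (simp add: m_assoc[symmetric])
    finally show ?thesis using k'(2) by simp
  qed
  show ?thesis
  proof (rule bij_betw_byWitness[where f' = "\<lambda>X. inv k <# X"])
    show "\<forall>X\<in>?C. inv k <# (k <# X) = X" using cancel[of "inv k" k] kG by simp
    show "\<forall>X\<in>?C. k <# (inv k <# X) = X" using cancel[of k "inv k"] kG by simp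
    show "(\<lambda>X. k <# X) ` ?C \<subseteq> ?C" using maps k by blast
    show "(\<lambda>X. inv k <# X) ` ?C \<subseteq> ?C" using maps kK' by blast
  qed
qed

context coset_space
begin

definition crossed_hom :: "('a \<Rightarrow> 'a set \<Rightarrow> rat) \<Rightarrow> bool" where
  "crossed_hom c \<longleftrightarrow> (\<forall>g\<in>carrier G. c g \<in> QGK_car) \<and>
     (\<forall>g\<in>carrier G. \<forall>h\<in>carrier G. c (g \<otimes> h) = c g + coset_act G K g (c h))"

lemma crossed_hom_closed: "crossed_hom c \<Longrightarrow> g \<in> carrier G \<Longrightarrow> c g \<in> QGK_car"
  unfolding crossed_hom_def by blast

lemma crossed_hom_mult:
  "crossed_hom c \<Longrightarrow> g \<in> carrier G \<Longrightarrow> h \<in> carrier G \<Longrightarrow> c (g \<otimes> h) = c g + coset_act G K g (c h)"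
  unfolding crossed_hom_def by blast

lemma crossed_hom_one: "crossed_hom c \<Longrightarrow> c \<one> = 0"
  using crossed_hom_mult[of c \<one> \<one>] crossed_hom_closed[of c \<one>]
  by (simp add: coset_act_one QGK_car_coset_funs)

lemma crossed_hom_principal:
  assumes "\<alpha> \<in> coset_funs G K" "\<And>g. g \<in> carrier G \<Longrightarrow> coset_act G K g \<alpha> - \<alpha> \<in> QGK_car"
  shows "crossed_hom (\<lambda>g. coset_act G K g \<alpha> - \<alpha>)"
  using assms unfolding crossed_hom_def by (simp add: coset_act_mult coset_act_diff)

lemma crossed_hom_lcoset_eq:
  assumes c: "crossed_hom c" and U: "subgroup U G" "\<And>u. u \<in> U \<Longrightarrow> c u = 0"
    and ab: "a \<in> carrier G" "b \<in> carrier G" "a <# U = b <# U"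
  shows "c a = c b"
proof -
  have "b \<in> a <# U" using ab lcos_self[OF ab(2) U(1)] by simp
  then obtain u where u: "u \<in> U" "b = a \<otimes> u" unfolding l_coset_def by blast
  then show ?thesis using crossed_hom_mult[OF c ab(1), of u] U subgroup.subset by fastforce
qed

lemma crossed_hom_sum_over_lcosets_act:
  assumes c: "crossed_hom c" and U: "subgroup U G" "U \<subseteq> K" "\<And>u. u \<in> U \<Longrightarrow> c u = 0"
    and rep: "\<And>X. X \<in> (\<lambda>k. k <# U) ` K \<Longrightarrow> rep X \<in> K \<and> X = rep X <# U"
    and k: "k \<in> K"
  defines "C \<equiv> (\<lambda>k. k <# U) ` K"
  shows "coset_act G K k (\<lambda>x. \<Sum>X\<in>C. c (rep X) x) =
      (\<lambda>x. \<Sum>X\<in>C. c (rep X) x) - fscale (of_nat (card C)) (c k)"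
proof
  fix x
  let ?s = "\<lambda>x. \<Sum>X\<in>C. c (rep X) x"
  have kG: "k \<in> carrier G" using k K_subset by blast
  have shift: "coset_act G K k (c (rep X)) = c (rep (k <# X)) - c k" if X: "X \<in> C" for X
  proof -
    have rep_X: "rep X \<in> K" "X = rep X <# U" using rep X unfolding C_def by auto
    then have "k <# X = (k \<otimes> rep X) <# U"
      using kG K_subset subgroup.subset[OF U(1)] by (metis lcos_m_assoc subsetD)
    moreover have "rep (k <# X) \<in> K" "k <# X = rep (k <# X) <# U"
      using rep lcoset_mult_permutes_lcosets[OF U(1,2) subgroup_K k] X
      unfolding C_def bij_betw_def by blast+
    ultimately have "c (rep (k <# X)) = c (k \<otimes> rep X)"
      using crossed_hom_lcoset_eq[OF c U(1,3)] subgroup.m_closed[OF subgroup_K k rep_X(1)] K_subset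
      by (metis subsetD)
    then show ?thesis using crossed_hom_mult[OF c kG, of "rep X"] rep_X K_subset by auto
  qed
  have reindex: "(\<Sum>X\<in>C. c (rep (k <# X)) x) = ?s x"
    using sum.reindex_bij_betw[OF lcoset_mult_permutes_lcosets[OF U(1,2) subgroup_K k],
        of "\<lambda>X. c (rep X) x"]
    unfolding C_def by simp
  show "coset_act G K k ?s x = (?s - fscale (of_nat (card C)) (c k)) x"
  proof (cases "x \<in> lcosets K")
    case True
    then have "coset_act G K k ?s x = (\<Sum>X\<in>C. coset_act G K k (c (rep X)) x)"
      unfolding coset_act_def by simp
    also have "\<dots> = (\<Sum>X\<in>C. c (rep (k <# X)) x - c k x)"
      using shift by (intro sum.cong) auto
    also have "\<dots> = ?s x - of_nat (card C) * c k x"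
      by (simp add: sum_subtractf reindex)
    finally show ?thesis by (simp add: fscale_def)
  next
    case False
    have "c g x = 0" if "g \<in> carrier G" for g
      using QGK_car_coset_funs[OF crossed_hom_closed[OF c that]] False unfolding coset_funs_def by blast
    moreover have "rep X \<in> carrier G" if "X \<in> C" for X using rep that K_subset unfolding C_def by blast
    ultimately have "?s x = 0" "c k x = 0" using kG by (simp_all add: sum.neutral)
    then show ?thesis using False unfolding coset_act_def fscale_def by simp
  qed
qed

text \<open>The witness m is minus the average of c over representatives of K/U.\<close>

lemma crossed_hom_average:
  assumes c: "crossed_hom c" and U: "subgroup U G" "U \<subseteq> K" "\<And>u. u \<in> U \<Longrightarrow> c u = 0"
    and fin: "finite ((\<lambda>k. k <# U) ` K)"
  shows "\<exists>m\<in>QGK_car. \<forall>k\<in>K. c k = coset_act G K k m - m"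
proof -
  define C where "C = (\<lambda>k. k <# U) ` K"
  define rep where "rep X = (SOME k. k \<in> K \<and> X = k <# U)" for X
  have rep: "rep X \<in> K \<and> X = rep X <# U" if "X \<in> C" for X
    unfolding rep_def by (rule someI_ex) (use that C_def in blast)
  define s where "s = (\<lambda>x. \<Sum>X\<in>C. c (rep X) x)"
  have s: "s \<in> QGK_car"
    unfolding s_def using fin rep crossed_hom_closed[OF c] K_subset C_def
    by (intro QGK_car_sum) auto
  have "\<one> <# U \<in> C" unfolding C_def using subgroup.one_closed[OF subgroup_K] by blast
  then have n: "card C \<noteq> 0" using fin unfolding C_def by auto
  define m where "m = fscale (- 1 / of_nat (card C)) s"
  have "c k = coset_act G K k m - m" if "k \<in> K" for k
  proof -
    have "coset_act G K k m - m = fscale (- 1 / of_nat (card C)) (coset_act G K k s - s)"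
      unfolding m_def by (simp add: coset_act_fscale fscale_diff)
    also have "\<dots> = c k"
      using crossed_hom_sum_over_lcosets_act[OF c U rep that] n
      unfolding s_def C_def by (simp add: fscale_def fun_eq_iff)
    finally show ?thesis by simp
  qed
  moreover have "m \<in> QGK_car" unfolding m_def using s by (rule QGK_car_fscale)
  ultimately show ?thesis by blast
qed

lemma crossed_hom_vanishing_on_K_lcoset_eq:
  assumes c: "crossed_hom c" "\<And>k. k \<in> K \<Longrightarrow> c k = 0"
    and xy: "x \<in> carrier G" "y \<in> carrier G" "x <# K = y <# K"
  shows "c (inv x) K = c (inv y) K"
proof -
  have "y \<in> x <# K" using xy lcos_self[OF xy(2) subgroup_K] by simp
  then obtain k where k: "k \<in> K" "y = x \<otimes> k" unfolding l_coset_def by blast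
  have kG: "k \<in> carrier G" "inv k \<in> K"
    using k(1) K_subset subgroup.m_inv_closed[OF subgroup_K k(1)] by auto
  have "c (inv y) = coset_act G K (inv k) (c (inv x))"
    using crossed_hom_mult[OF c(1), of "inv k" "inv x"] c(2) kG xy k by (simp add: inv_mult_group)
  moreover have "coset_act G K (inv k) (c (inv x)) K = c (inv x) (k <# K)"
    using coset_act_lcoset[of "inv k" \<one>] kG lcos_mult_one[OF K_subset] by simp
  moreover have "k <# K = K"
    using l_repr_independence[of k \<one> K] subgroup_K k lcos_mult_one[OF K_subset] by simp
  ultimately show ?thesis by simp
qed

text \<open>The primitive is \<alpha>(xK) = c(x^-1)(K).\<close>

lemma crossed_hom_vanishing_on_K_principal:
  assumes c: "crossed_hom c" "\<And>k. k \<in> K \<Longrightarrow> c k = 0"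
  shows "\<exists>\<alpha>\<in>AInv G K. \<forall>g\<in>carrier G. coset_act G K g \<alpha> - \<alpha> = c g"
proof -
  define \<alpha> where
    "\<alpha> X = (if X \<in> lcosets K then c (inv (SOME x. x \<in> carrier G \<and> X = x <# K)) K else 0)" for X
  have \<alpha>_lcoset: "\<alpha> (x <# K) = c (inv x) K" if x: "x \<in> carrier G" for x
  proof -
    have "\<exists>r. r \<in> carrier G \<and> x <# K = r <# K" using x by blast
    from someI_ex[OF this] show ?thesis
      unfolding \<alpha>_def using crossed_hom_vanishing_on_K_lcoset_eq[OF c x] lcoset_in_lcosets[OF x]
      by simp metis
  qed
  have \<alpha>_act: "coset_act G K g \<alpha> - \<alpha> = c g" if g: "g \<in> carrier G" for g
  proof
    fix X
    show "(coset_act G K g \<alpha> - \<alpha>) X = c g X"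
    proof (cases "X \<in> lcosets K")
      case True
      then obtain x where x: "x \<in> carrier G" "X = x <# K" by (rule lcosetsE)
      have "coset_act G K g \<alpha> X = c (inv x \<otimes> g) K"
        using x g coset_act_lcoset \<alpha>_lcoset by (simp add: inv_mult_group)
      also have "\<dots> = \<alpha> X + c g X"
        using crossed_hom_mult[OF c(1), of "inv x" g] x g coset_act_lcoset[of "inv x" \<one> "c g"]
          \<alpha>_lcoset lcos_mult_one[OF K_subset] by simp
      finally show ?thesis by simp
    qed (use QGK_car_coset_funs[OF crossed_hom_closed[OF c(1) g]] in
          \<open>simp add: coset_act_def coset_funs_def \<alpha>_def\<close>)
  qed
  have "\<alpha> \<in> AInv G K"
  proof (rule AInvI)
    show "\<alpha> \<in> coset_funs G K" unfolding coset_funs_def \<alpha>_def by simp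
    show "coset_act G K g \<alpha> - \<alpha> \<in> QGK_car" if "g \<in> carrier G" for g
      using \<alpha>_act[OF that] crossed_hom_closed[OF c(1) that] by simp
    show "coset_act G K k \<alpha> = \<alpha>" if "k \<in> K" for k
      using \<alpha>_act[of k] c(2)[OF that] that K_subset by (metis subsetD eq_iff_diff_eq_0)
  qed
  with \<alpha>_act show ?thesis by blast
qed


definition twisted_module :: "('a \<Rightarrow> 'a set \<Rightarrow> rat) \<Rightarrow> ('a, ('a set \<Rightarrow> rat) \<times> rat) qg_module" where
  "twisted_module c = \<lparr>mcar = QGK_car \<times> UNIV,
     madd = (\<lambda>p p'. (fst p + fst p', snd p + snd p')), mzero = (0, 0),
     msmul = (\<lambda>q p. (fscale q (fst p), q * snd p)),
     mact = (\<lambda>g p. (coset_act G K g (fst p) + fscale (snd p) (c g), snd p))\<rparr>"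

lemma twisted_module_simps:
  "mcar (twisted_module c) = QGK_car \<times> UNIV"
  "madd (twisted_module c) p p' = (fst p + fst p', snd p + snd p')"
  "mzero (twisted_module c) = (0, 0)"
  "msmul (twisted_module c) q p = (fscale q (fst p), q * snd p)"
  "mact (twisted_module c) g p = (coset_act G K g (fst p) + fscale (snd p) (c g), snd p)"
  unfolding twisted_module_def by simp_all

lemma qg_module_twisted_module:
  assumes c: "crossed_hom c"
  shows "qg_module G (twisted_module c)"
proof -
  have "rat_vector_space (twisted_module c)"
    unfolding rat_vector_space_def twisted_module_simps
  proof (intro conjI ballI allI)
    fix x :: "('a set \<Rightarrow> rat) \<times> rat" assume "x \<in> QGK_car \<times> UNIV"
    then show "\<exists>y\<in>QGK_car \<times> UNIV. (fst x + fst y, snd x + snd y) = (0, 0)"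
      using QGK_car_fscale[of "fst x" "-1"]
      by (intro bexI[of _ "(fscale (-1) (fst x), - snd x)"]) (auto simp: fscale_def fun_eq_iff)
  qed (auto simp: QGK_car_add QGK_car_fscale[unfolded fscale_def] fscale_def fun_eq_iff algebra_simps)
  then show ?thesis
    unfolding qg_module_def
  proof (intro conjI ballI allI)
    fix g x assume g: "g \<in> carrier G" and x: "x \<in> mcar (twisted_module c)"
    show "mact (twisted_module c) g x \<in> mcar (twisted_module c)"
      using g x crossed_hom_closed[OF c] QGK_car_act QGK_car_add QGK_car_fscale
      by (auto simp: twisted_module_simps)
    show "mact (twisted_module c) g (msmul (twisted_module c) q x) =
        msmul (twisted_module c) q (mact (twisted_module c) g x)" for q
      by (simp add: twisted_module_simps coset_act_fscale fscale_add) (simp add: fscale_def fun_eq_iff)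
    fix h assume h: "h \<in> carrier G"
    have "fst x \<in> coset_funs G K" using x QGK_car_coset_funs by (auto simp: twisted_module_simps)
    then show "mact (twisted_module c) (g \<otimes> h) x = mact (twisted_module c) g (mact (twisted_module c) h x)"
      using g h by (simp add: twisted_module_simps coset_act_mult crossed_hom_mult[OF c] coset_act_add
          coset_act_fscale) (simp add: fscale_def fun_eq_iff algebra_simps)
  next
    fix g x y assume "g \<in> carrier G"
    show "mact (twisted_module c) g (madd (twisted_module c) x y) =
        madd (twisted_module c) (mact (twisted_module c) g x) (mact (twisted_module c) g y)"
      by (simp add: twisted_module_simps coset_act_add) (simp add: fscale_def fun_eq_iff algebra_simps)
  next
    fix x assume "x \<in> mcar (twisted_module c)"
    then show "mact (twisted_module c) \<one> x = x"
      using crossed_hom_one[OF c] coset_act_one QGK_car_coset_funs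
      by (auto simp: twisted_module_simps fscale_def)
  qed
qed

lemma discrete_twisted_module:
  assumes T: "topological_group G T" "openin T K" "discrete_module G T (QGK G K)"
    and c: "crossed_hom c" "\<And>k. k \<in> K \<Longrightarrow> c k = 0"
  shows "discrete_module G T (twisted_module c)"
  unfolding discrete_module_def
proof (intro conjI qg_module_twisted_module[OF c(1)] ballI)
  fix x assume x: "x \<in> mcar (twisted_module c)"
  let ?S = "{g \<in> carrier G. mact (twisted_module c) g x = x}"
  let ?U = "{g \<in> carrier G. coset_act G K g (fst x) = fst x} \<inter> K"
  have "openin T {g \<in> carrier G. coset_act G K g (fst x) = fst x}"
    using T(3) x unfolding discrete_module_def by (auto simp: twisted_module_simps QGK_simps)
  then have U_open: "openin T ?U" using T(2) by (rule openin_Int)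
  have U_one: "\<one> \<in> ?U"
    using x coset_act_one QGK_car_coset_funs subgroup.one_closed[OF subgroup_K]
    by (auto simp: twisted_module_simps)
  have U_fixes: "mact (twisted_module c) u x = x" if "u \<in> ?U" for u
    using that c(2) by (auto simp: twisted_module_simps prod_eq_iff)
  have "s \<otimes> u \<in> ?S" if s: "s \<in> ?S" and u: "u \<in> ?U" for s u
  proof -
    have "mact (twisted_module c) (s \<otimes> u) x = mact (twisted_module c) s (mact (twisted_module c) u x)"
      using s u x qg_module_act_mult[OF qg_module_twisted_module[OF c(1)]] by blast
    then show ?thesis using s u U_fixes by simp
  qed
  then show "openin T ?S"
    using openin_if_right_mult_closed[OF T(1) U_open U_one, of ?S] by blast
qed

text \<open>An injection of Q[G/K] \<times> Q into Q[G/K]: the pair (\<beta>(K), t) is hidden in the value at the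
  coset K via a countable encoding.\<close>

definition encode_pair :: "('a set \<Rightarrow> rat) \<times> rat \<Rightarrow> 'a set \<Rightarrow> rat" where
  "encode_pair p = (fst p)(K := of_nat (to_nat (fst p K, snd p)))"

lemma encode_pair_in_QGK_car: "p \<in> QGK_car \<times> UNIV \<Longrightarrow> encode_pair p \<in> QGK_car"
proof -
  assume "p \<in> QGK_car \<times> UNIV"
  then have p: "fst p \<in> coset_funs G K" "finite {x. fst p x \<noteq> 0}" by (auto simp: QGK_car_iff)
  have "{x. encode_pair p x \<noteq> 0} \<subseteq> insert K {x. fst p x \<noteq> 0}" unfolding encode_pair_def by auto
  then have "finite {x. encode_pair p x \<noteq> 0}" by (rule finite_subset) (simp add: p(2))
  moreover have "encode_pair p \<in> coset_funs G K"
    using p(1) K_in_lcosets unfolding coset_funs_def encode_pair_def by auto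
  ultimately show ?thesis unfolding QGK_car_iff by blast
qed

lemma inj_on_encode_pair: "inj_on encode_pair (QGK_car \<times> UNIV)"
proof (rule inj_onI)
  fix p p' assume eq: "encode_pair p = encode_pair p'"
  have "of_nat (to_nat (fst p K, snd p)) = (of_nat (to_nat (fst p' K, snd p')) :: rat)"
    using fun_cong[OF eq, of K] unfolding encode_pair_def by simp
  then have K: "fst p K = fst p' K" and snd: "snd p = snd p'"
    by (simp_all only: of_nat_eq_iff to_nat_split prod.inject)
  have "fst p x = fst p' x" for x
    using fun_cong[OF eq, of x] K unfolding encode_pair_def by (cases "x = K") simp_all
  then show "p = p'" using snd by (simp add: prod_eq_iff fun_eq_iff)
qed

text \<open>The element y is the image of (0, 1) under an extension of \<epsilon> to the twisted module of c.\<close>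

lemma injective_module_crossed_hom_coboundary:
  fixes I :: "('a, 'm) qg_module"
  assumes T: "topological_group G T" "openin T K" "discrete_module G T (QGK G K)"
    and I: "injective_discrete_module G T I"
    and \<epsilon>: "module_hom G (QGK G K) I \<epsilon>" "inj_on \<epsilon> QGK_car"
    and c: "crossed_hom c" "\<And>k. k \<in> K \<Longrightarrow> c k = 0"
  shows "\<exists>y\<in>mcar I. \<forall>g\<in>carrier G. mact I g y = madd I (\<epsilon> (c g)) y"
proof -
  define E where "E = twisted_module c"
  define E0 where "E0 = E\<lparr>mcar := QGK_car \<times> {0}\<rparr>"
  have DE: "discrete_module G T E" unfolding E_def using discrete_twisted_module[OF T c] .
  have DE0: "discrete_module G T E0"
    unfolding E0_def using DE
    by (rule discrete_submodule)
       (auto simp: E_def twisted_module_simps QGK_car_add QGK_car_fscale QGK_car_act)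
  have car_E: "mcar E = QGK_car \<times> UNIV" unfolding E_def by (simp add: twisted_module_simps)
  have "inj_on \<epsilon> (encode_pair ` mcar E)"
    using inj_on_subset[OF \<epsilon>(2)] encode_pair_in_QGK_car car_E by (metis image_subsetI)
  then have inj_E: "inj_on (\<epsilon> \<circ> encode_pair) (mcar E)"
    using comp_inj_on inj_on_encode_pair car_E by metis
  have "module_hom G E0 I (\<lambda>p. \<epsilon> (fst p))"
    unfolding module_hom_def
    using module_hom_closed[OF \<epsilon>(1)] module_hom_add[OF \<epsilon>(1)] module_hom_smul[OF \<epsilon>(1)]
      module_hom_act[OF \<epsilon>(1)]
    by (auto simp: E0_def E_def twisted_module_simps QGK_simps)
  then obtain H where H: "module_hom G E I H" "\<And>\<beta>. \<beta> \<in> QGK_car \<Longrightarrow> H (\<beta>, 0) = \<epsilon> \<beta>"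
    using injective_discrete_module_extend[OF I DE DE0[unfolded E0_def] _ inj_E]
    unfolding E0_def by (fastforce simp: car_E)
  define y where "y = H (0, 1)"
  have "mact I g y = madd I (\<epsilon> (c g)) y" if g: "g \<in> carrier G" for g
  proof -
    have "mact I g y = H (mact E g (0, 1))"
      unfolding y_def using module_hom_act[OF H(1) g, of "(0, 1)"] by (simp add: E_def twisted_module_simps)
    also have "mact E g (0, 1) = madd E (c g, 0) (0, 1)"
      by (simp add: E_def twisted_module_simps fscale_def)
    also have "H \<dots> = madd I (H (c g, 0)) y"
      unfolding y_def using module_hom_add[OF H(1), of "(c g, 0)" "(0, 1)"] crossed_hom_closed[OF c(1) g]
      by (simp add: E_def twisted_module_simps)
    finally show ?thesis using H(2) crossed_hom_closed[OF c(1) g] by simp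
  qed
  moreover have "y \<in> mcar I"
    unfolding y_def using module_hom_closed[OF H(1)] by (simp add: E_def twisted_module_simps)
  ultimately show ?thesis by blast
qed

end
section \<open>Quotient isomorphisms from linear correspondences\<close>

interpretation fun_vs: vector_space "fscale :: rat \<Rightarrow> ('x \<Rightarrow> rat) \<Rightarrow> 'x \<Rightarrow> rat"
  by unfold_locales (auto simp: fscale_def fun_eq_iff algebra_simps)

interpretation fun_vs_pair: vector_space_pair
    "fscale :: rat \<Rightarrow> ('x \<Rightarrow> rat) \<Rightarrow> 'x \<Rightarrow> rat" "fscale :: rat \<Rightarrow> ('x \<Rightarrow> rat) \<Rightarrow> 'x \<Rightarrow> rat"
  by unfold_locales

lemma linear_projection_onto_subspace:
  fixes W :: "('x \<Rightarrow> rat) set"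
  assumes W: "0 \<in> W" "\<And>v w. v \<in> W \<Longrightarrow> w \<in> W \<Longrightarrow> v + w \<in> W" "\<And>q w. w \<in> W \<Longrightarrow> fscale q w \<in> W"
  obtains P where "\<And>v w. P (v + w) = P v + P w" "\<And>q v. P (fscale q v) = fscale q (P v)"
    "\<And>v. P v \<in> W" "\<And>w. w \<in> W \<Longrightarrow> P w = w"
proof -
  have subspace: "fun_vs.subspace W" using W by (auto simp: fun_vs.subspace_def)
  obtain B where B: "B \<subseteq> W" "fun_vs.independent B" "W \<subseteq> fun_vs.span B"
    using fun_vs.maximal_independent_subset[of W] by blast
  have span: "fun_vs.span B = W" using B fun_vs.span_minimal[OF B(1) subspace] by blast
  define P where "P = fun_vs_pair.construct B id"
  have linear: "Vector_Spaces.linear fscale fscale P"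
    unfolding P_def by (rule fun_vs_pair.linear_construct[OF B(2)])
  show ?thesis
  proof
    show "P (v + w) = P v + P w" "P (fscale q v) = fscale q (P v)" for v w q
      using linear unfolding Vector_Spaces.linear_iff by auto
    show "P v \<in> W" for v
      using fun_vs_pair.construct_in_span[OF B(2), of id] span unfolding P_def by simp
    show "P w = w" if "w \<in> W" for w
    proof -
      have "P w = id w"
        unfolding P_def
        by (rule fun_vs_pair.linear_eq_on[OF linear[unfolded P_def] fun_vs.linear_id])
           (use that span fun_vs_pair.construct_basis[OF B(2)] in auto)
      then show ?thesis by simp
    qed
  qed
qed

text \<open>The isomorphism sends z to a - P a for any a related to z, where P is a linear projection
  onto W; this makes the choice of a irrelevant and the map linear.\<close>

lemma quotient_iso_from_correspondence:
  fixes R :: "'m \<Rightarrow> ('x \<Rightarrow> rat) \<Rightarrow> bool"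
  assumes W: "0 \<in> W" "\<And>v w. v \<in> W \<Longrightarrow> w \<in> W \<Longrightarrow> v + w \<in> W" "\<And>q w. w \<in> W \<Longrightarrow> fscale q w \<in> W"
    and A: "W \<subseteq> A" "\<And>a b. a \<in> A \<Longrightarrow> b \<in> A \<Longrightarrow> a - b \<in> A"
    and R_A: "\<And>z a. R z a \<Longrightarrow> a \<in> A"
    and total: "\<And>z. z \<in> Z \<Longrightarrow> \<exists>a. R z a"
    and onto: "\<And>a. a \<in> A \<Longrightarrow> \<exists>z\<in>Z. R z a"
    and unique: "\<And>z a b. R z a \<Longrightarrow> R z b \<Longrightarrow> a - b \<in> W"
    and add: "\<And>x y a b. x \<in> Z \<Longrightarrow> y \<in> Z \<Longrightarrow> R x a \<Longrightarrow> R y b \<Longrightarrow> R (add x y) (a + b)"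
    and smul: "\<And>x q a. x \<in> Z \<Longrightarrow> R x a \<Longrightarrow> R (smul q x) (fscale q a)"
    and kernel: "\<And>z a. z \<in> Z \<Longrightarrow> R z a \<Longrightarrow> z \<in> B \<longleftrightarrow> a \<in> W"
  shows "quotient_iso Z add smul B A W"
proof -
  obtain P where P: "\<And>v w. P (v + w) = P v + P w" "\<And>q v. P (fscale q v) = fscale q (P v)"
    "\<And>v. P v \<in> W" "\<And>w. w \<in> W \<Longrightarrow> P w = w"
    using linear_projection_onto_subspace[OF W] by blast
  have P_diff: "P (v - w) = P v - P w" for v w
    using P(1)[of "v - w" w] by simp
  define rep where "rep z = (SOME a. R z a)" for z
  define f where "f z = rep z - P (rep z)" for z
  have R_rep: "R z (rep z)" if "R z a" for z a
    unfolding rep_def using that by (rule someI[where P = "R z"])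
  have f_eq: "f z = a - P a" if "R z a" for z a
  proof -
    have "rep z - a \<in> W" using unique[OF R_rep[OF that] that] .
    then have "rep z - a = P (rep z) - P a" using P(4) P_diff by metis
    then show ?thesis unfolding f_def by (simp add: algebra_simps)
  qed
  have R_f: "\<exists>a. R z a \<and> f z = a - P a" if "z \<in> Z" for z
    using total[OF that] f_eq by blast
  show ?thesis
    unfolding quotient_iso_def
  proof (intro exI[of _ f] conjI ballI allI)
    fix z assume z: "z \<in> Z"
    then obtain a where a: "R z a" "f z = a - P a" using R_f by blast
    show "f z \<in> A" using A(2)[OF R_A[OF a(1)] subsetD[OF A(1) P(3)]] a(2) by simp
    have "f z \<in> W \<longleftrightarrow> a \<in> W"
    proof
      assume "f z \<in> W"
      then have "f z + P a \<in> W" using W(2) P(3) by blast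
      then show "a \<in> W" using a(2) by simp
    next
      assume "a \<in> W"
      then show "f z \<in> W" using a(2) P(4) W(1) by simp
    qed
    then show "f z \<in> W \<longleftrightarrow> z \<in> B" using kernel[OF z a(1)] by simp
    fix q
    have "f (smul q z) = fscale q a - P (fscale q a)" using f_eq[OF smul[OF z a(1)]] .
    also have "\<dots> = fscale q (f z)" using a(2) P(2) by (simp add: fscale_diff)
    finally show "f (smul q z) = (\<lambda>x. q * f z x)" by (simp add: fscale_def)
  next
    fix x y assume x: "x \<in> Z" and y: "y \<in> Z"
    obtain a where a: "R x a" "f x = a - P a" using R_f[OF x] by blast
    obtain b where b: "R y b" "f y = b - P b" using R_f[OF y] by blast
    have "f (add x y) = (a + b) - P (a + b)" using f_eq[OF add[OF x y a(1) b(1)]] .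
    also have "\<dots> = f x + f y" using a(2) b(2) P(1) by simp
    finally show "f (add x y) = (\<lambda>v. f x v + f y v)" by (simp add: plus_fun_def)
  next
    fix a assume "a \<in> A"
    then obtain z where z: "z \<in> Z" "R z a" using onto by blast
    then have "(\<lambda>b. a b - f z b) = P a" using f_eq[OF z(2)] by (simp add: fun_eq_iff)
    then show "\<exists>z\<in>Z. (\<lambda>b. a b - f z b) \<in> W" using z(1) P(3) by metis
  qed
qed
section \<open>The first cohomology of Q[G/K]\<close>

locale resolution = coset_space +
  fixes T :: "'a topology" and I0 I1 I2 :: "('a, 'm) qg_module"
    and \<epsilon> :: "('a set \<Rightarrow> rat) \<Rightarrow> 'm" and d0 d1 :: "'m \<Rightarrow> 'm"
  assumes tdlc: "tdlc_group G T" and open_K: "openin T K" and compact_K: "compactin T K"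
    and injective_resolution: "injective_resolution_1 G T (QGK G K) I0 I1 I2 \<epsilon> d0 d1"
begin

lemma tdlc_topological_group: "topological_group G T"
  using tdlc unfolding tdlc_group_def by blast

lemma discrete_QGK: "discrete_module G T (QGK G K)"
  and injective_I0: "injective_discrete_module G T I0"
  and hom_\<epsilon>: "module_hom G (QGK G K) I0 \<epsilon>" and hom_d0: "module_hom G I0 I1 d0"
  and inj_\<epsilon>: "inj_on \<epsilon> QGK_car"
  and image_\<epsilon>: "\<epsilon> ` QGK_car = {x \<in> mcar I0. d0 x = mzero I1}"
  and image_d0: "d0 ` mcar I0 = {x \<in> mcar I1. d1 x = mzero I2}"
  using injective_resolution unfolding injective_resolution_1_def by blast+

lemma discrete_I0: "discrete_module G T I0"
  using injective_I0 unfolding injective_discrete_module_def by blast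

lemma qg_module_I0: "qg_module G I0" and qg_module_I1: "qg_module G I1"
  using injective_resolution
  unfolding injective_resolution_1_def injective_discrete_module_def discrete_module_def by blast+

sublocale I0: rat_vs I0 using qg_module_rat_vs[OF qg_module_I0] .
sublocale I1: rat_vs I1 using qg_module_rat_vs[OF qg_module_I1] .

lemma \<epsilon>_closed [simp]: "\<alpha> \<in> QGK_car \<Longrightarrow> \<epsilon> \<alpha> \<in> mcar I0"
  using module_hom_closed[OF hom_\<epsilon>] .

lemma \<epsilon>_add: "\<alpha> \<in> QGK_car \<Longrightarrow> \<beta> \<in> QGK_car \<Longrightarrow> \<epsilon> (\<alpha> + \<beta>) = madd I0 (\<epsilon> \<alpha>) (\<epsilon> \<beta>)"
  using module_hom_add[OF hom_\<epsilon>] by (simp add: QGK_simps)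

lemma \<epsilon>_fscale: "\<alpha> \<in> QGK_car \<Longrightarrow> \<epsilon> (fscale q \<alpha>) = msmul I0 q (\<epsilon> \<alpha>)"
  using module_hom_smul[OF hom_\<epsilon>] by (simp add: QGK_simps)

lemma \<epsilon>_act: "g \<in> carrier G \<Longrightarrow> \<alpha> \<in> QGK_car \<Longrightarrow> \<epsilon> (coset_act G K g \<alpha>) = mact I0 g (\<epsilon> \<alpha>)"
  using module_hom_act[OF hom_\<epsilon>] by (simp add: QGK_simps)

lemma \<epsilon>_zero [simp]: "\<epsilon> 0 = mzero I0"
proof -
  have "\<epsilon> 0 = \<epsilon> (fscale 0 0)" by simp
  also have "\<dots> = msmul I0 0 (\<epsilon> 0)" by (rule \<epsilon>_fscale) simp
  also have "\<dots> = mzero I0" by (rule I0.zero_smul) simp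
  finally show ?thesis .
qed

lemma d0_\<epsilon> [simp]: "\<alpha> \<in> QGK_car \<Longrightarrow> d0 (\<epsilon> \<alpha>) = mzero I1"
  using image_\<epsilon> by blast

lemma \<epsilon>_eqD: "\<alpha> \<in> QGK_car \<Longrightarrow> \<beta> \<in> QGK_car \<Longrightarrow> \<epsilon> \<alpha> = \<epsilon> \<beta> \<Longrightarrow> \<alpha> = \<beta>"
  using inj_\<epsilon> by (meson inj_onD)

lemma d0_closed [simp]: "y \<in> mcar I0 \<Longrightarrow> d0 y \<in> mcar I1"
  using module_hom_closed[OF hom_d0] .

lemma d0_add: "x \<in> mcar I0 \<Longrightarrow> y \<in> mcar I0 \<Longrightarrow> d0 (madd I0 x y) = madd I1 (d0 x) (d0 y)"
  using module_hom_add[OF hom_d0] .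

lemma d0_smul: "x \<in> mcar I0 \<Longrightarrow> d0 (msmul I0 q x) = msmul I1 q (d0 x)"
  using module_hom_smul[OF hom_d0] .

lemma d0_act: "g \<in> carrier G \<Longrightarrow> x \<in> mcar I0 \<Longrightarrow> d0 (mact I0 g x) = mact I1 g (d0 x)"
  using module_hom_act[OF hom_d0] .

lemma I0_act_closed [simp]: "g \<in> carrier G \<Longrightarrow> x \<in> mcar I0 \<Longrightarrow> mact I0 g x \<in> mcar I0"
  using qg_module_act_closed[OF qg_module_I0] .

lemma I0_act_add:
  "g \<in> carrier G \<Longrightarrow> x \<in> mcar I0 \<Longrightarrow> y \<in> mcar I0 \<Longrightarrow> mact I0 g (madd I0 x y) = madd I0 (mact I0 g x) (mact I0 g y)"
  using qg_module_act_add[OF qg_module_I0] .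

lemma I0_act_smul: "g \<in> carrier G \<Longrightarrow> x \<in> mcar I0 \<Longrightarrow> mact I0 g (msmul I0 q x) = msmul I0 q (mact I0 g x)"
  using qg_module_act_smul[OF qg_module_I0] .

definition has_coboundary :: "'m \<Rightarrow> ('a \<Rightarrow> 'a set \<Rightarrow> rat) \<Rightarrow> bool" where
  "has_coboundary y c \<longleftrightarrow> y \<in> mcar I0 \<and>
     (\<forall>g\<in>carrier G. c g \<in> QGK_car \<and> mact I0 g y = madd I0 (\<epsilon> (c g)) y)"

lemma has_coboundaryD:
  assumes "has_coboundary y c"
  shows "y \<in> mcar I0" "g \<in> carrier G \<Longrightarrow> c g \<in> QGK_car"
    "g \<in> carrier G \<Longrightarrow> mact I0 g y = madd I0 (\<epsilon> (c g)) y"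
  using assms unfolding has_coboundary_def by blast+

lemma has_coboundary_\<epsilon>:
  assumes "\<beta> \<in> QGK_car"
  shows "has_coboundary (\<epsilon> \<beta>) (\<lambda>g. coset_act G K g \<beta> - \<beta>)"
  unfolding has_coboundary_def
proof (intro conjI ballI)
  fix g assume g: "g \<in> carrier G"
  have "mact I0 g (\<epsilon> \<beta>) = \<epsilon> ((coset_act G K g \<beta> - \<beta>) + \<beta>)" using assms g by (simp add: \<epsilon>_act)
  also have "\<dots> = madd I0 (\<epsilon> (coset_act G K g \<beta> - \<beta>)) (\<epsilon> \<beta>)"
    using assms g by (intro \<epsilon>_add) (simp_all add: QGK_car_act QGK_car_diff)
  finally show "mact I0 g (\<epsilon> \<beta>) = madd I0 (\<epsilon> (coset_act G K g \<beta> - \<beta>)) (\<epsilon> \<beta>)" .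
qed (use assms in \<open>simp_all add: QGK_car_act QGK_car_diff\<close>)

lemma has_coboundary_add:
  assumes hy: "has_coboundary y c" and hy': "has_coboundary y' c'"
  shows "has_coboundary (madd I0 y y') (\<lambda>g. c g + c' g)"
  unfolding has_coboundary_def
proof (intro conjI ballI)
  note y = has_coboundaryD[OF hy] and y' = has_coboundaryD[OF hy']
  show "madd I0 y y' \<in> mcar I0" using y(1) y'(1) by simp
  fix g assume g: "g \<in> carrier G"
  show "c g + c' g \<in> QGK_car" using y(2) y'(2) g QGK_car_add by blast
  have "mact I0 g (madd I0 y y') = madd I0 (madd I0 (\<epsilon> (c g)) y) (madd I0 (\<epsilon> (c' g)) y')"
    using y y' g by (simp add: I0_act_add)
  also have "\<dots> = madd I0 (madd I0 (\<epsilon> (c g)) (\<epsilon> (c' g))) (madd I0 y y')"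
    using y(1,2) y'(1,2) g by (intro I0.add_add_add_swap) simp_all
  also have "\<dots> = madd I0 (\<epsilon> (c g + c' g)) (madd I0 y y')" using y(2) y'(2) g by (simp add: \<epsilon>_add)
  finally show "mact I0 g (madd I0 y y') = madd I0 (\<epsilon> (c g + c' g)) (madd I0 y y')" .
qed

lemma has_coboundary_smul:
  assumes y: "has_coboundary y c"
  shows "has_coboundary (msmul I0 q y) (\<lambda>g. fscale q (c g))"
  unfolding has_coboundary_def
  using has_coboundaryD[OF y] by (simp add: I0_act_smul \<epsilon>_fscale QGK_car_fscale I0.smul_add)

lemma has_coboundary_diff:
  assumes "has_coboundary y c" "has_coboundary y' c'"
  shows "has_coboundary (madd I0 y (msmul I0 (-1) y')) (\<lambda>g. c g - c' g)"
proof -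
  have eq: "(\<lambda>g. c g + fscale (-1) (c' g)) = (\<lambda>g. c g - c' g)"
    by (simp add: fscale_def fun_eq_iff)
  from has_coboundary_add[OF assms(1) has_coboundary_smul[OF assms(2), of "-1"]]
  show ?thesis by (simp only: eq)
qed

lemma has_coboundary_unique:
  assumes "has_coboundary y c" "has_coboundary y c'" "g \<in> carrier G"
  shows "c g = c' g"
proof -
  note y = has_coboundaryD[OF assms(1)] and y' = has_coboundaryD[OF assms(2)]
  have "madd I0 (\<epsilon> (c g)) y = madd I0 (\<epsilon> (c' g)) y" using y(3) y'(3) assms(3) by simp
  then have "\<epsilon> (c g) = \<epsilon> (c' g)"
    by (rule I0.add_right_cancel[rotated 3]) (use y(1,2) y'(2) assms(3) in simp_all)
  then show ?thesis
    by (rule \<epsilon>_eqD[rotated 2]) (use y(2) y'(2) assms(3) in simp_all)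
qed

lemma has_coboundary_crossed_hom:
  assumes hy: "has_coboundary y c"
  shows "crossed_hom c"
  unfolding crossed_hom_def
proof (intro conjI ballI)
  fix g h assume g: "g \<in> carrier G" and h: "h \<in> carrier G"
  note y = has_coboundaryD[OF hy]
  have c_car: "c g \<in> QGK_car" "c h \<in> QGK_car" "coset_act G K g (c h) \<in> QGK_car"
    using y(2) g h QGK_car_act by auto
  have "madd I0 (\<epsilon> (c (g \<otimes> h))) y = mact I0 (g \<otimes> h) y" using y(3) g h by simp
  also have "\<dots> = mact I0 g (mact I0 h y)" using qg_module_act_mult[OF qg_module_I0 g h y(1)] .
  also have "\<dots> = madd I0 (\<epsilon> (coset_act G K g (c h))) (madd I0 (\<epsilon> (c g)) y)"
    using y(1,3) g h c_car by (simp add: I0_act_add \<epsilon>_act)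
  also have "\<dots> = madd I0 (\<epsilon> (c g)) (madd I0 (\<epsilon> (coset_act G K g (c h))) y)"
    using y(1) c_car by (intro I0.add_left_commute) simp_all
  also have "\<dots> = madd I0 (\<epsilon> (c g + coset_act G K g (c h))) y"
    using y(1) c_car by (simp add: \<epsilon>_add I0.add_assoc)
  finally have "\<epsilon> (c (g \<otimes> h)) = \<epsilon> (c g + coset_act G K g (c h))"
    by (rule I0.add_right_cancel[rotated 3]) (use y(1,2) g h c_car QGK_car_add in simp_all)
  then show "c (g \<otimes> h) = c g + coset_act G K g (c h)"
    by (rule \<epsilon>_eqD[rotated 2]) (use y(2) g h c_car QGK_car_add in simp_all)
qed (use has_coboundaryD(2)[OF hy] in blast)

definition represents :: "'m \<Rightarrow> ('a set \<Rightarrow> rat) \<Rightarrow> bool" where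
  "represents z \<alpha> \<longleftrightarrow> \<alpha> \<in> AInv G K \<and> (\<exists>y. d0 y = z \<and> has_coboundary y (\<lambda>g. coset_act G K g \<alpha> - \<alpha>))"

lemma represents_AInv: "represents z \<alpha> \<Longrightarrow> \<alpha> \<in> AInv G K"
  unfolding represents_def by blast

lemma represents_add:
  assumes "represents z \<alpha>" "represents z' \<alpha>'"
  shows "represents (madd I1 z z') (\<alpha> + \<alpha>')"
proof -
  obtain y y' where y: "d0 y = z" "has_coboundary y (\<lambda>g. coset_act G K g \<alpha> - \<alpha>)"
    and y': "d0 y' = z'" "has_coboundary y' (\<lambda>g. coset_act G K g \<alpha>' - \<alpha>')"
    using assms unfolding represents_def by blast
  have "(\<lambda>g. (coset_act G K g \<alpha> - \<alpha>) + (coset_act G K g \<alpha>' - \<alpha>')) =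
      (\<lambda>g. coset_act G K g (\<alpha> + \<alpha>') - (\<alpha> + \<alpha>'))"
    by (simp add: coset_act_add algebra_simps)
  then have "has_coboundary (madd I0 y y') (\<lambda>g. coset_act G K g (\<alpha> + \<alpha>') - (\<alpha> + \<alpha>'))"
    using has_coboundary_add[OF y(2) y'(2)] by simp
  moreover have "d0 (madd I0 y y') = madd I1 z z'"
    using y y' has_coboundaryD(1)[OF y(2)] has_coboundaryD(1)[OF y'(2)] by (simp add: d0_add)
  ultimately show ?thesis
    using AInv_add[OF assms[THEN represents_AInv]] unfolding represents_def by blast
qed

lemma represents_fscale:
  assumes "represents z \<alpha>"
  shows "represents (msmul I1 q z) (fscale q \<alpha>)"
proof -
  obtain y where y: "d0 y = z" "has_coboundary y (\<lambda>g. coset_act G K g \<alpha> - \<alpha>)"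
    using assms unfolding represents_def by blast
  have "(\<lambda>g. fscale q (coset_act G K g \<alpha> - \<alpha>)) = (\<lambda>g. coset_act G K g (fscale q \<alpha>) - fscale q \<alpha>)"
    by (simp add: coset_act_fscale fscale_diff)
  then have "has_coboundary (msmul I0 q y) (\<lambda>g. coset_act G K g (fscale q \<alpha>) - fscale q \<alpha>)"
    using has_coboundary_smul[OF y(2), of q] by simp
  moreover have "d0 (msmul I0 q y) = msmul I1 q z"
    using y has_coboundaryD(1)[OF y(2)] by (simp add: d0_smul)
  ultimately show ?thesis
    using AInv_fscale[OF represents_AInv[OF assms]] unfolding represents_def by blast
qed

text \<open>The difference is the constant \<alpha> - \<alpha>' - m plus the K-invariant m with \<epsilon> m = y - y'.\<close>

lemma represents_unique:
  assumes "represents z \<alpha>" "represents z \<alpha>'"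
  shows "\<alpha> - \<alpha>' \<in> const_plus_fixed"
proof -
  obtain y y' where y: "d0 y = z" "has_coboundary y (\<lambda>g. coset_act G K g \<alpha> - \<alpha>)"
    and y': "d0 y' = z" "has_coboundary y' (\<lambda>g. coset_act G K g \<alpha>' - \<alpha>')"
    and \<alpha>: "\<alpha> \<in> AInv G K" "\<alpha>' \<in> AInv G K"
    using assms unfolding represents_def by blast
  define u where "u = madd I0 y (msmul I0 (-1) y')"
  have u: "has_coboundary u (\<lambda>g. (coset_act G K g \<alpha> - \<alpha>) - (coset_act G K g \<alpha>' - \<alpha>'))"
    unfolding u_def using y(2) y'(2) by (rule has_coboundary_diff)
  have "d0 u = mzero I1"
    using has_coboundaryD(1)[OF y(2)] has_coboundaryD(1)[OF y'(2)] y(1) y'(1) d0_closed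
    unfolding u_def by (fastforce simp: d0_add d0_smul)
  then have "u \<in> \<epsilon> ` QGK_car" using image_\<epsilon> has_coboundaryD(1)[OF u] by blast
  then obtain m where m: "m \<in> QGK_car" "\<epsilon> m = u" by blast
  have m_act: "coset_act G K g m - m = (coset_act G K g \<alpha> - \<alpha>) - (coset_act G K g \<alpha>' - \<alpha>')"
    if "g \<in> carrier G" for g
    using has_coboundary_unique[OF has_coboundary_\<epsilon>[OF m(1)] u[folded m(2)] that] .
  have const: "\<alpha> - \<alpha>' - m \<in> const_coset_funs G K"
  proof (rule invariant_imp_const_coset_funs)
    show "\<alpha> - \<alpha>' - m \<in> coset_funs G K"
      using \<alpha> m AInv_coset_funs QGK_car_coset_funs coset_funs_diff by blast
    show "coset_act G K g (\<alpha> - \<alpha>' - m) = \<alpha> - \<alpha>' - m" if "g \<in> carrier G" for g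
      using m_act[OF that] unfolding coset_act_diff by (simp add: algebra_simps)
  qed
  have "coset_act G K k m = m" if "k \<in> K" for k
    using m_act[OF subsetD[OF K_subset that]] AInv_K_invariant[OF \<alpha>(1) that]
      AInv_K_invariant[OF \<alpha>(2) that] by simp
  then have "m \<in> QGK_fixed G K" unfolding QGK_fixed_iff using m(1) by blast
  moreover have "\<alpha> - \<alpha>' = (\<alpha> - \<alpha>' - m) + m" by simp
  ultimately show ?thesis using const unfolding const_plus_fixed_iff by blast
qed

lemma represents_coboundary_iff:
  assumes "represents z \<alpha>"
  shows "z \<in> dH1_coboundaries G I0 d0 \<longleftrightarrow> \<alpha> \<in> const_plus_fixed"
proof
  assume "z \<in> dH1_coboundaries G I0 d0"
  then obtain y0 where y0: "y0 \<in> mcar I0" "\<forall>g\<in>carrier G. mact I0 g y0 = y0" "z = d0 y0"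
    unfolding dH1_coboundaries_def fixed_points_def by auto
  then have "represents z 0" unfolding represents_def has_coboundary_def using AInv_zero by auto
  from represents_unique[OF assms this] show "\<alpha> \<in> const_plus_fixed" by simp
next
  assume "\<alpha> \<in> const_plus_fixed"
  then obtain c \<beta> where c: "c \<in> const_coset_funs G K" and \<beta>: "\<beta> \<in> QGK_fixed G K" and "\<alpha> = c + \<beta>"
    unfolding const_plus_fixed_iff by blast
  then have \<alpha>_act: "coset_act G K g \<alpha> - \<alpha> = coset_act G K g \<beta> - \<beta>" if "g \<in> carrier G" for g
    using const_coset_funs_invariant[OF c that] by (simp add: coset_act_add)
  obtain y where y: "d0 y = z" "has_coboundary y (\<lambda>g. coset_act G K g \<alpha> - \<alpha>)"
    using assms unfolding represents_def by blast
  have \<beta>_car: "\<beta> \<in> QGK_car" using \<beta> QGK_fixed_iff by blast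
  define y' where "y' = madd I0 y (msmul I0 (-1) (\<epsilon> \<beta>))"
  have "has_coboundary y' (\<lambda>g. (coset_act G K g \<alpha> - \<alpha>) - (coset_act G K g \<beta> - \<beta>))"
    unfolding y'_def using y(2) has_coboundary_\<epsilon>[OF \<beta>_car] by (rule has_coboundary_diff)
  then have "y' \<in> fixed_points G I0"
    unfolding fixed_points_def has_coboundary_def using \<alpha>_act I0.zero_add by auto
  moreover have "d0 y' = z"
    unfolding y'_def using y has_coboundaryD(1)[OF y(2)] \<beta>_car d0_closed by (fastforce simp: d0_add d0_smul)
  ultimately show "z \<in> dH1_coboundaries G I0 d0"
    unfolding dH1_coboundaries_def by blast
qed

lemma has_coboundary_if_d0_fixed:
  assumes y0: "y0 \<in> mcar I0" and fixed: "\<And>g. g \<in> carrier G \<Longrightarrow> mact I1 g (d0 y0) = d0 y0"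
  shows "\<exists>c. has_coboundary y0 c"
proof -
  define c where "c g = inv_into QGK_car \<epsilon> (madd I0 (mact I0 g y0) (msmul I0 (-1) y0))" for g
  have "madd I0 (mact I0 g y0) (msmul I0 (-1) y0) \<in> \<epsilon> ` QGK_car" if g: "g \<in> carrier G" for g
    using image_\<epsilon> y0 g fixed[OF g] by (simp add: d0_add d0_smul d0_act)
  then have "c g \<in> QGK_car \<and> \<epsilon> (c g) = madd I0 (mact I0 g y0) (msmul I0 (-1) y0)"
    if "g \<in> carrier G" for g
    unfolding c_def using that by (simp add: inv_into_into f_inv_into_f)
  then have "has_coboundary y0 c"
    unfolding has_coboundary_def using y0 by (simp add: I0.add_assoc)
  then show ?thesis by blast
qed

text \<open>The coboundary c of a lift y0 of z vanishes on the open stabiliser of y0 in K; averaging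
  over K corrects y0 until c vanishes on K, and then c is principal.\<close>

lemma cocycle_represented:
  assumes z: "z \<in> dH1_cocycles G I1 I2 d1"
  shows "\<exists>\<alpha>. represents z \<alpha>"
proof -
  have z_car: "z \<in> mcar I1" and fixed: "\<And>g. g \<in> carrier G \<Longrightarrow> mact I1 g z = z"
    and "d1 z = mzero I2"
    using z unfolding dH1_cocycles_def fixed_points_def by auto
  then have "z \<in> d0 ` mcar I0" by (simp add: image_d0)
  then obtain y0 where y0: "y0 \<in> mcar I0" "d0 y0 = z" by blast
  have "mact I1 g (d0 y0) = d0 y0" if "g \<in> carrier G" for g using fixed[OF that] y0(2) by simp
  then obtain c where y0_c: "has_coboundary y0 c" using has_coboundary_if_d0_fixed[OF y0(1)] by blast
  define S where "S = {g \<in> carrier G. mact I0 g y0 = y0}"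
  have "openin T S" using discrete_I0 y0(1) unfolding discrete_module_def S_def by blast
  have U: "subgroup (S \<inter> K) G" "openin T (S \<inter> K)" "S \<inter> K \<subseteq> K"
    using subgroups_Inter_pair[OF qg_module_stabiliser_subgroup[OF qg_module_I0 y0(1), folded S_def]
        subgroup_K] openin_Int[OF \<open>openin T S\<close> open_K] by simp_all
  have "c u = 0" if "u \<in> S \<inter> K" for u
  proof -
    have u: "u \<in> carrier G" "mact I0 u y0 = y0" using that by (auto simp: S_def)
    have cu: "c u \<in> QGK_car" using has_coboundaryD(2)[OF y0_c u(1)] .
    have "madd I0 (\<epsilon> (c u)) y0 = mact I0 u y0" using has_coboundaryD(3)[OF y0_c u(1)] by simp
    also have "\<dots> = madd I0 (mzero I0) y0" using u(2) y0(1) by simp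
    finally have "\<epsilon> (c u) = mzero I0"
      by (rule I0.add_right_cancel[rotated 3]) (use cu y0(1) in simp_all)
    then show ?thesis using \<epsilon>_eqD[OF cu QGK_car_zero] by simp
  qed
  then obtain m where m: "m \<in> QGK_car" "\<And>k. k \<in> K \<Longrightarrow> c k = coset_act G K k m - m"
    using crossed_hom_average[OF has_coboundary_crossed_hom[OF y0_c] U(1,3)]
      finite_lcosets_in_compact[OF tdlc_topological_group U subgroup_K compact_K] by blast
  define y where "y = madd I0 y0 (msmul I0 (-1) (\<epsilon> m))"
  have y: "has_coboundary y (\<lambda>g. c g - (coset_act G K g m - m))"
    unfolding y_def using y0_c has_coboundary_\<epsilon>[OF m(1)] by (rule has_coboundary_diff)
  have "c k - (coset_act G K k m - m) = 0" if "k \<in> K" for k using m(2)[OF that] by simp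
  then obtain \<alpha> where \<alpha>: "\<alpha> \<in> AInv G K"
    "\<And>g. g \<in> carrier G \<Longrightarrow> coset_act G K g \<alpha> - \<alpha> = c g - (coset_act G K g m - m)"
    using crossed_hom_vanishing_on_K_principal[OF has_coboundary_crossed_hom[OF y]] by blast
  have "has_coboundary y (\<lambda>g. coset_act G K g \<alpha> - \<alpha>)"
    using y \<alpha>(2) unfolding has_coboundary_def by simp
  moreover have "d0 y = z" unfolding y_def using y0 m(1) z_car by (simp add: d0_add d0_smul)
  ultimately show ?thesis using \<alpha>(1) unfolding represents_def by blast
qed

lemma AInv_represented:
  assumes \<alpha>: "\<alpha> \<in> AInv G K"
  shows "\<exists>z\<in>dH1_cocycles G I1 I2 d1. represents z \<alpha>"
proof -
  let ?c = "\<lambda>g. coset_act G K g \<alpha> - \<alpha>"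
  have "crossed_hom ?c" using crossed_hom_principal[OF AInv_coset_funs[OF \<alpha>] AInv_act_diff[OF \<alpha>]] .
  moreover have "\<And>k. k \<in> K \<Longrightarrow> ?c k = 0" using AInv_K_invariant[OF \<alpha>] by simp
  ultimately obtain y where y: "y \<in> mcar I0" "\<And>g. g \<in> carrier G \<Longrightarrow> mact I0 g y = madd I0 (\<epsilon> (?c g)) y"
    using injective_module_crossed_hom_coboundary[OF tdlc_topological_group open_K discrete_QGK
        injective_I0 hom_\<epsilon> inj_\<epsilon>] by blast
  have "has_coboundary y ?c"
    unfolding has_coboundary_def using y AInv_act_diff[OF \<alpha>] by blast
  then have "represents (d0 y) \<alpha>" unfolding represents_def using \<alpha> by blast
  moreover have "d0 y \<in> dH1_cocycles G I1 I2 d1"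
  proof -
    have "d0 y \<in> d0 ` mcar I0" using y(1) by blast
    then have "d0 y \<in> mcar I1" "d1 (d0 y) = mzero I2" by (simp_all add: image_d0)
    moreover have "mact I1 g (d0 y) = d0 y" if g: "g \<in> carrier G" for g
      using y g AInv_act_diff[OF \<alpha> g] by (simp add: d0_act[symmetric] d0_add)
    ultimately show ?thesis unfolding dH1_cocycles_def fixed_points_def by blast
  qed
  ultimately show ?thesis by blast
qed

lemma dH1_quotient_iso:
  "quotient_iso (dH1_cocycles G I1 I2 d1) (madd I1) (msmul I1) (dH1_coboundaries G I0 d0)
     (AInv G K) const_plus_fixed"
  by (rule quotient_iso_from_correspondence[where R = represents])
     (simp_all add: const_plus_fixed_zero const_plus_fixed_add const_plus_fixed_fscale
       const_plus_fixed_subset_AInv AInv_diff represents_AInv cocycle_represented AInv_represented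
       represents_unique represents_add represents_fscale represents_coboundary_iff)

end

theorem proposition3p3:
  fixes G :: "('g, 'b) monoid_scheme" and T :: "'g topology" and K :: "'g set"
    and I0 I1 I2 :: "('g, 'm) qg_module"
    and \<epsilon> :: "('g set \<Rightarrow> rat) \<Rightarrow> 'm" and d0 d1 :: "'m \<Rightarrow> 'm"
  assumes "tdlc_group G T"
    and "subgroup K G" and "openin T K" and "compactin T K"
    and "injective_resolution_1 G T (QGK G K) I0 I1 I2 \<epsilon> d0 d1"
  shows "quotient_iso (dH1_cocycles G I1 I2 d1) (madd I1) (msmul I1) (dH1_coboundaries G I0 d0)
           (AInv G K) {(\<lambda>x. c x + \<beta> x) |c \<beta>. c \<in> const_coset_funs G K \<and> \<beta> \<in> QGK_fixed G K}"
proof -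
  have "group G"
    using assms(1) unfolding tdlc_group_def topological_group_def by blast
  then interpret resolution G K T I0 I1 I2 \<epsilon> d0 d1
    by (intro resolution.intro coset_space.intro coset_space_axioms.intro resolution_axioms.intro assms)
  show ?thesis using dH1_quotient_iso unfolding const_plus_fixed_def .
qed

end
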